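(* For $m\ge0$ there are bijections $$B_m(\mathbb C)\backslash\mathrm{Her}_m(\mathbb C)\simeq B_m(\mathbb R)\backslash\mathrm{Sym}_m(\mathbb R)\simeq\coprod_{\substack{p,q\ge0\\0\le p+q\le m}}\ \coprod_{J\in\binom{[m]}{p+q}}\Gamma(p,q).$$
   Context: $B_m(\mathbb C)$ (resp. $B_m(\mathbb R)$) is the group of invertible upper triangular complex (resp. real) $m\times m$ matrices, acting on the space $\mathrm{Her}_m(\mathbb C)$ of Hermitian matrices by $b\cdot z=bzb^*$ (resp. on the real symmetric matrices $\mathrm{Sym}_m(\mathbb R)$ by $b\cdot z=bzb^t$). $\binom{[m]}{k}$ is the set of $k$-element subsets of $\{1,\dots,m\}$ (these indices only record multiplicities). $\Gamma(p,q)$ is the set of maps $\gamma:\{1,\dots,p+q\}\to\{1,\dots,p+q\}\cup\{+,-\}$ such that $\gamma(i)=j\in\{1,\dots,p+q\}$ implies $i\ne j$ and $\gamma(j)=i$, and $\#\gamma^{-1}(+)-\#\gamma^{-1}(-)=p-q$; $\Gamma(0,0)$ consists of the empty map. *)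

theory Defs
  imports "Jordan_Normal_Form.Matrix" "HOL-Library.FuncSet"
begin

definition adj_mat :: "complex mat \<Rightarrow> complex mat" where
  "adj_mat b = mat (dim_col b) (dim_row b) (\<lambda>(i,j). cnj (b $$ (j,i)))"

definition Her :: "nat \<Rightarrow> complex mat set" where
  "Her m = {z \<in> carrier_mat m m. adj_mat z = z}"

definition Sym :: "nat \<Rightarrow> real mat set" where
  "Sym m = {z \<in> carrier_mat m m. transpose_mat z = z}"

definition Borel :: "nat \<Rightarrow> 'a::semiring_1 mat set" where
  "Borel m = {b \<in> carrier_mat m m. upper_triangular b \<and> invertible_mat b}"

definition orbit_rel_C :: "nat \<Rightarrow> complex mat rel" where
  "orbit_rel_C m = {(z, w). z \<in> Her m \<and> w \<in> Her m \<and>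
      (\<exists>b \<in> (Borel m :: complex mat set). w = b * z * adj_mat b)}"

definition orbit_rel_R :: "nat \<Rightarrow> real mat rel" where
  "orbit_rel_R m = {(z, w). z \<in> Sym m \<and> w \<in> Sym m \<and>
      (\<exists>b \<in> (Borel m :: real mat set). w = b * z * transpose_mat b)}"

datatype gval = Idx nat | Pl | Mi

definition Gamma :: "nat \<Rightarrow> nat \<Rightarrow> (nat \<Rightarrow> gval) set" where
  "Gamma p q = {\<gamma> \<in> {1..p+q} \<rightarrow>\<^sub>E (Idx ` {1..p+q} \<union> {Pl, Mi}).
      (\<forall>i \<in> {1..p+q}. \<forall>j. \<gamma> i = Idx j \<longrightarrow> i \<noteq> j \<and> \<gamma> j = Idx i) \<and>
      int (card {i \<in> {1..p+q}. \<gamma> i = Pl}) - int (card {i \<in> {1..p+q}. \<gamma> i = Mi})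
        = int p - int q}"

text \<open>The disjoint union over p,q \<ge> 0 with p+q \<le> m and J a (p+q)-subset of [m]
  of Gamma(p,q), as a set of tagged tuples (p,q,J,gamma).\<close>
definition Coprod :: "nat \<Rightarrow> (nat \<times> nat \<times> nat set \<times> (nat \<Rightarrow> gval)) set" where
  "Coprod m = {(p, q, J, \<gamma>). p + q \<le> m \<and> J \<subseteq> {1..m} \<and> card J = p + q \<and> \<gamma> \<in> Gamma p q}"

end

theory Submission
  imports "Jordan_Normal_Form.Determinant" "Jordan_Normal_Form.Schur_Decomposition"
    "Jordan_Normal_Form.Column_Operations" Defs
begin

section \<open>Invertible upper triangular matrices\<close>

lemma index_mult_mat_sum:
  assumes "A \<in> carrier_mat n k" "B \<in> carrier_mat k p" "i < n" "j < p"
  shows "(A * B) $$ (i, j) = (\<Sum>r<k. A $$ (i, r) * B $$ (r, j))"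
  using assms by (auto simp: scalar_prod_def atLeast0LessThan intro!: sum.cong)

lemma upper_triangular_mult_index:
  fixes A B :: "'a::semiring_0 mat"
  assumes A: "A \<in> carrier_mat n n" "upper_triangular A"
    and B: "B \<in> carrier_mat n n" "upper_triangular B"
    and ij: "i < n" "j \<le> i"
  shows "(A * B) $$ (i, j) = (if j = i then A $$ (i, i) * B $$ (i, i) else 0)"
proof -
  have "(A * B) $$ (i, j) = (\<Sum>r<n. A $$ (i, r) * B $$ (r, j))"
    using A B ij by (intro index_mult_mat_sum) auto
  also have "\<dots> = (\<Sum>r\<in>{i}. A $$ (i, r) * B $$ (r, j))"
  proof (rule sum.mono_neutral_right)
    show "\<forall>r\<in>{..<n} - {i}. A $$ (i, r) * B $$ (r, j) = 0"
    proof
      fix r assume r: "r \<in> {..<n} - {i}"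
      show "A $$ (i, r) * B $$ (r, j) = 0"
      proof (cases "r < i")
        case True then show ?thesis using A ij by (simp add: upper_triangularD)
      next
        case False then have "j < r" using r ij by auto
        then show ?thesis using B r by (simp add: upper_triangularD)
      qed
    qed
  qed (use ij in auto)
  finally show ?thesis
    using B ij by (simp add: upper_triangularD)
qed

lemma upper_triangular_mult:
  fixes A B :: "'a::semiring_0 mat"
  assumes "A \<in> carrier_mat n n" "upper_triangular A" "B \<in> carrier_mat n n" "upper_triangular B"
  shows "upper_triangular (A * B)"
  using upper_triangular_mult_index[OF assms] assms(1) by (auto intro!: upper_triangularI)

lemma det_upper_triangular_prod:
  assumes "upper_triangular A" "A \<in> carrier_mat n n"
  shows "det A = (\<Prod>i<n. A $$ (i, i))"
  using det_upper_triangular[OF assms] assms(2)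
  by (simp add: prod_list_diag_prod atLeast0LessThan)

lemma Borel_iff:
  "(b \<in> (Borel m :: 'a::field mat set)) \<longleftrightarrow>
     b \<in> carrier_mat m m \<and> upper_triangular b \<and> (\<forall>i<m. b $$ (i, i) \<noteq> 0)"
proof
  assume "b \<in> Borel m"
  then have b: "b \<in> carrier_mat m m" "upper_triangular b" "invertible_mat b"
    unfolding Borel_def by auto
  then obtain c where c: "b * c = 1\<^sub>m m" "c * b = 1\<^sub>m (dim_row c)"
    unfolding invertible_mat_def inverts_mat_def by auto
  have "c \<in> carrier_mat m m"
    using c b(1) by (metis carrier_matD carrier_matI index_mult_mat(2,3) index_one_mat(2,3))
  then have "det b * det c = 1"
    using det_mult[OF b(1), of c] c(1) by (simp add: det_one)
  then have "(\<Prod>i<m. b $$ (i, i)) \<noteq> 0"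
    using det_upper_triangular_prod[OF b(2,1)] by (metis mult_zero_left zero_neq_one)
  then show "b \<in> carrier_mat m m \<and> upper_triangular b \<and> (\<forall>i<m. b $$ (i, i) \<noteq> 0)"
    using b by auto
next
  assume b: "b \<in> carrier_mat m m \<and> upper_triangular b \<and> (\<forall>i<m. b $$ (i, i) \<noteq> 0)"
  then have "det b \<noteq> 0"
    using det_upper_triangular_prod[of b m] by auto
  define c where "c = (1 / det b) \<cdot>\<^sub>m Determinant.adj_mat b"
  have adj: "Determinant.adj_mat b \<in> carrier_mat m m" using Determinant.adj_mat(1) b by blast
  have "b * c = 1\<^sub>m m" "c * b = 1\<^sub>m m"
    unfolding c_def using b adj \<open>det b \<noteq> 0\<close>
    by (auto simp: mult_smult_distrib mult_smult_assoc_mat Determinant.adj_mat(2,3) intro!: eq_matI)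
  then have "invertible_mat b"
    using b adj unfolding invertible_mat_def inverts_mat_def c_def by auto
  then show "b \<in> Borel m" using b unfolding Borel_def by auto
qed

lemma Borel_one: "1\<^sub>m m \<in> (Borel m :: 'a::field mat set)"
  by (simp add: Borel_iff)

lemma Borel_mult:
  assumes "b \<in> Borel m" "c \<in> Borel m"
  shows "b * c \<in> (Borel m :: 'a::field mat set)"
  using assms upper_triangular_mult[of b m c] upper_triangular_mult_index[of b m c]
  by (auto simp: Borel_iff)

text \<open>At the last nonzero entry of \<open>w\<close>, the product with an invertible upper
  triangular matrix only sees the diagonal.\<close>
lemma Borel_mult_last_nonzero:
  fixes b :: "'a::field mat"
  assumes b: "b \<in> Borel n" and w: "\<exists>s<n. w s \<noteq> 0"
  obtains r where "r < n" "w r \<noteq> 0" "\<forall>s. r < s \<and> s < n \<longrightarrow> w s = 0"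
    "(\<Sum>s<n. b $$ (r, s) * w s) \<noteq> 0"
proof -
  define S where "S = {s. s < n \<and> w s \<noteq> 0}"
  have S: "finite S" "S \<noteq> {}" using w unfolding S_def by auto
  define r where "r = Max S"
  have r: "r < n" "w r \<noteq> 0" using Max_in[OF S] unfolding r_def S_def by auto
  have last: "\<forall>s. r < s \<and> s < n \<longrightarrow> w s = 0"
    using Max_ge[OF S(1)] unfolding r_def by (auto simp: S_def not_less[symmetric])
  have "(\<Sum>s<n. b $$ (r, s) * w s) = (\<Sum>s\<in>{r}. b $$ (r, s) * w s)"
  proof (rule sum.mono_neutral_right)
    show "\<forall>s\<in>{..<n} - {r}. b $$ (r, s) * w s = 0"
    proof
      fix s assume s: "s \<in> {..<n} - {r}"
      show "b $$ (r, s) * w s = 0"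
      proof (cases "s < r")
        case True then show ?thesis
          using b r(1) unfolding Borel_iff by (metis carrier_matD(1) mult_zero_left upper_triangularD)
      next
        case False then show ?thesis using last s by auto
      qed
    qed
  qed (use r in auto)
  then show ?thesis
    using that r last b by (auto simp: Borel_iff)
qed

lemma Borel_inverse:
  fixes b :: "'a::field mat"
  assumes b: "b \<in> Borel m"
  obtains c where "c \<in> Borel m" "b * c = 1\<^sub>m m" "c * b = 1\<^sub>m m"
proof -
  have bc: "b \<in> carrier_mat m m" "invertible_mat b" using b unfolding Borel_def by auto
  then obtain c where c: "b * c = 1\<^sub>m m" "c * b = 1\<^sub>m (dim_row c)"
    unfolding invertible_mat_def inverts_mat_def by auto
  have cc: "c \<in> carrier_mat m m"
    using c bc(1) by (metis carrier_matD carrier_matI index_mult_mat(2,3) index_one_mat(2,3))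
  have "upper_triangular c"
  proof (rule upper_triangularI, rule ccontr)
    fix i j assume ij: "j < i" "i < dim_row c" and nz: "c $$ (i, j) \<noteq> 0"
    have im: "i < m" using ij cc by simp
    then have "\<exists>s<m. c $$ (s, j) \<noteq> 0" using nz by blast
    then obtain r where r: "r < m" "\<forall>s. r < s \<and> s < m \<longrightarrow> c $$ (s, j) = 0"
      "(\<Sum>s<m. b $$ (r, s) * c $$ (s, j)) \<noteq> 0"
      by (rule Borel_mult_last_nonzero[OF b])
    have "i \<le> r" using r(2) nz im by (meson not_le)
    then have "j < r" using ij by simp
    have "(b * c) $$ (r, j) = (\<Sum>s<m. b $$ (r, s) * c $$ (s, j))"
      using \<open>j < r\<close> r(1) by (intro index_mult_mat_sum[OF bc(1) cc]) auto
    then show False using c(1) r(1,3) \<open>j < r\<close> by simp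
  qed
  moreover have "c $$ (i, i) \<noteq> 0" if "i < m" for i
  proof -
    have "b $$ (i, i) * c $$ (i, i) = 1"
      using upper_triangular_mult_index[OF bc(1) _ cc \<open>upper_triangular c\<close> that, of i] b c(1) that
      by (simp add: Borel_iff)
    then show ?thesis by auto
  qed
  ultimately have "c \<in> Borel m" using cc by (simp add: Borel_iff)
  then show ?thesis using that c cc by simp
qed

lemma addrow_mat_Borel:
  "k < l \<Longrightarrow> l < n \<Longrightarrow> addrow_mat n a k l \<in> (Borel n :: 'a::field mat set)"
  by (auto simp: Borel_iff upper_triangular_def)

lemma multrow_mat_Borel:
  "a \<noteq> 0 \<Longrightarrow> multrow_mat n k a \<in> (Borel n :: 'a::field mat set)"
  by (auto simp: Borel_iff upper_triangular_def)

lemma mat_delete_0_0_index [simp]: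
  "i < dim_row A - 1 \<Longrightarrow> j < dim_col A - 1 \<Longrightarrow> mat_delete A 0 0 $$ (i, j) = A $$ (Suc i, Suc j)"
  by (simp add: mat_delete_def)

lemma mat_delete_Borel:
  "b \<in> Borel (Suc m) \<Longrightarrow> mat_delete b 0 0 \<in> (Borel m :: 'a::field mat set)"
  by (auto simp: Borel_iff upper_triangular_def mat_delete_carrier[of _ "Suc m" "Suc m", simplified])

lemma Borel_extend:
  assumes "b \<in> (Borel m :: 'a::field mat set)"
  obtains c where "c \<in> Borel (Suc m)" "mat_delete c 0 0 = b"
proof
  let ?c = "mat (Suc m) (Suc m) (\<lambda>(i, j). if i = 0 \<or> j = 0 then (if i = j then 1 else 0)
    else b $$ (i - 1, j - 1))"
  show "?c \<in> Borel (Suc m)"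
    using assms by (auto simp: Borel_iff upper_triangular_def gr0_conv_Suc)
  show "mat_delete ?c 0 0 = b"
    using assms by (auto simp: Borel_iff intro!: eq_matI)
qed


section \<open>Congruence of Hermitian matrices\<close>

lemma conjugate_one [simp]: "conjugate (1::'a::conjugatable_field) = 1"
proof -
  have "conjugate (1::'a) * conjugate 1 = conjugate 1 * 1"
    by (simp flip: conjugate_dist_mul)
  then show ?thesis by (metis conjugate_zero_iff mult_left_cancel one_neq_zero)
qed

lemma conjugate_diff: "conjugate (a - b :: 'a::conjugatable_ring) = conjugate a - conjugate b"
  using conjugate_dist_add[of a "- b"] by (simp add: conjugate_neg)

lemma conjugate_inverse: "conjugate (inverse a :: 'a::conjugatable_field) = inverse (conjugate a)"
proof (cases "a = 0")
  case False
  then have "conjugate a * conjugate (inverse a) = 1"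
    by (simp flip: conjugate_dist_mul)
  then show ?thesis by (simp add: inverse_unique)
qed simp

lemma conjugate_divide: "conjugate (a / b :: 'a::conjugatable_field) = conjugate a / conjugate b"
  by (simp add: divide_inverse conjugate_dist_mul conjugate_inverse)

lemma mat_adjoint_dim [simp]:
  "dim_row (mat_adjoint A) = dim_col A" "dim_col (mat_adjoint A) = dim_row A"
  by (simp_all add: mat_adjoint_def)

lemma mat_adjoint_index [simp]:
  "i < dim_col A \<Longrightarrow> j < dim_row A \<Longrightarrow> mat_adjoint A $$ (i, j) = conjugate (A $$ (j, i))"
  by (simp add: mat_adjoint_def mat_of_rows_index)

lemma mat_adjoint_carrier [simp]: "A \<in> carrier_mat n k \<Longrightarrow> mat_adjoint A \<in> carrier_mat k n"
  by (metis carrier_matD carrier_matI mat_adjoint_dim)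

lemma mat_adjoint_adjoint [simp]: "mat_adjoint (mat_adjoint A) = A"
  by (rule eq_matI) auto

lemma mat_adjoint_mult:
  assumes "A \<in> carrier_mat n k" "B \<in> carrier_mat k p"
  shows "mat_adjoint (A * B) = mat_adjoint B * mat_adjoint A"
proof (rule eq_matI)
  fix i j assume "i < dim_row (mat_adjoint B * mat_adjoint A)" "j < dim_col (mat_adjoint B * mat_adjoint A)"
  then have ij: "i < p" "j < n" using assms by auto
  then have "mat_adjoint (A * B) $$ (i, j) = conjugate ((A * B) $$ (j, i))"
    using assms by simp
  also have "\<dots> = (\<Sum>r<k. conjugate (B $$ (r, i)) * conjugate (A $$ (j, r)))"
    unfolding index_mult_mat_sum[OF assms ij(2,1)]
    by (simp add: sum_conjugate conjugate_dist_mul mult.commute)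
  also have "\<dots> = (mat_adjoint B * mat_adjoint A) $$ (i, j)"
    using ij assms by (subst index_mult_mat_sum[of _ p k _ n]) auto
  finally show "mat_adjoint (A * B) $$ (i, j) = (mat_adjoint B * mat_adjoint A) $$ (i, j)" .
qed (use assms in auto)

lemma mat_adjoint_one [simp]: "mat_adjoint (1\<^sub>m n) = 1\<^sub>m n"
  by (rule eq_matI) auto

lemma mat_adjoint_addrow_mat:
  "mat_adjoint (addrow_mat n a k l) = addrow_mat n (conjugate a) l k"
  by (rule eq_matI) (auto simp: conjugate_dist_add)

lemma mat_adjoint_multrow_mat:
  "mat_adjoint (multrow_mat n k a) = multrow_mat n k (conjugate a)"
  by (rule eq_matI) auto

definition hermitian_mats :: "nat \<Rightarrow> 'a::conjugatable_field mat set" where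
  "hermitian_mats n = {z \<in> carrier_mat n n. mat_adjoint z = z}"

lemma hermitian_mats_carrier: "z \<in> hermitian_mats n \<Longrightarrow> z \<in> carrier_mat n n"
  by (simp add: hermitian_mats_def)

lemma hermitian_mats_index:
  assumes "z \<in> hermitian_mats n" "i < n" "j < n"
  shows "conjugate (z $$ (j, i)) = z $$ (i, j)"
proof -
  have z: "z \<in> carrier_mat n n" "mat_adjoint z = z" using assms(1) by (auto simp: hermitian_mats_def)
  have "conjugate (z $$ (j, i)) = mat_adjoint z $$ (i, j)" using z(1) assms(2,3) by simp
  then show ?thesis using z(2) by simp
qed

lemma congruence_hermitian:
  assumes "z \<in> hermitian_mats n" "b \<in> carrier_mat n n"
  shows "b * z * mat_adjoint b \<in> hermitian_mats n"
proof -
  have z: "z \<in> carrier_mat n n" "mat_adjoint z = z" using assms(1) by (auto simp: hermitian_mats_def)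
  have "mat_adjoint (b * z * mat_adjoint b) = b * (z * mat_adjoint b)"
    using z assms(2) by (simp add: mat_adjoint_mult[of _ n n _ n])
  also have "\<dots> = b * z * mat_adjoint b"
    using z assms(2) by (simp add: assoc_mult_mat[of _ n n _ n _ n])
  moreover have "b * z * mat_adjoint b \<in> carrier_mat n n"
    using z assms(2) by (meson mat_adjoint_carrier mult_carrier_mat)
  ultimately show ?thesis by (simp add: hermitian_mats_def)
qed

lemma congruence_mult:
  assumes "b \<in> carrier_mat n n" "c \<in> carrier_mat n n" "z \<in> carrier_mat n n"
  shows "c * (b * z * mat_adjoint b) * mat_adjoint c = (c * b) * z * mat_adjoint (c * b)"
proof -
  have adj: "mat_adjoint b \<in> carrier_mat n n" "mat_adjoint c \<in> carrier_mat n n"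
    using assms by auto
  have "c * (b * z * mat_adjoint b) * mat_adjoint c = c * (b * z * mat_adjoint b * mat_adjoint c)"
    using assms adj by (intro assoc_mult_mat) auto
  also have "b * z * mat_adjoint b * mat_adjoint c = (b * z) * (mat_adjoint b * mat_adjoint c)"
    using assms adj by (intro assoc_mult_mat) auto
  also have "c * ((b * z) * (mat_adjoint b * mat_adjoint c)) = (c * (b * z)) * (mat_adjoint b * mat_adjoint c)"
    using assms adj by (intro assoc_mult_mat[symmetric]) auto
  also have "c * (b * z) = (c * b) * z"
    using assms by (intro assoc_mult_mat[symmetric]) auto
  also have "mat_adjoint b * mat_adjoint c = mat_adjoint (c * b)"
    using mat_adjoint_mult[OF assms(2,1)] by simp
  finally show ?thesis .
qed

definition borel_congruent :: "nat \<Rightarrow> 'a::conjugatable_field mat rel" where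
  "borel_congruent n = {(z, w). z \<in> hermitian_mats n \<and> w \<in> hermitian_mats n \<and>
      (\<exists>b \<in> Borel n. w = b * z * mat_adjoint b)}"

lemma borel_congruentI:
  assumes "z \<in> hermitian_mats n" "b \<in> Borel n"
  shows "(z, b * z * mat_adjoint b) \<in> borel_congruent n"
proof -
  have "b \<in> carrier_mat n n" using assms(2) by (simp add: Borel_def)
  then show ?thesis using assms congruence_hermitian unfolding borel_congruent_def by blast
qed

lemma borel_congruent_hermitian:
  "(z, w) \<in> borel_congruent n \<Longrightarrow> z \<in> hermitian_mats n \<and> w \<in> hermitian_mats n"
  by (simp add: borel_congruent_def)

lemma equiv_borel_congruent: "equiv (hermitian_mats n) (borel_congruent n)"
proof (rule equivI)
  show "borel_congruent n \<subseteq> hermitian_mats n \<times> hermitian_mats n"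
    by (auto simp: borel_congruent_def)
  show "refl_on (hermitian_mats n) (borel_congruent n)"
  proof (rule refl_onI)
    fix z assume z: "z \<in> hermitian_mats n"
    then have "1\<^sub>m n * z * mat_adjoint (1\<^sub>m n) = z"
      using hermitian_mats_carrier[OF z] by (simp add: mat_adjoint_one)
    then show "(z, z) \<in> borel_congruent n"
      using borel_congruentI[OF z Borel_one] by simp
  qed
  show "sym (borel_congruent n)"
  proof (rule symI)
    fix z w assume "(z, w) \<in> borel_congruent n"
    then obtain b where zw: "z \<in> hermitian_mats n" "w \<in> hermitian_mats n" "b \<in> Borel n"
      "w = b * z * mat_adjoint b"
      unfolding borel_congruent_def by blast
    obtain c where c: "c \<in> Borel n" "c * b = 1\<^sub>m n" by (rule Borel_inverse[OF zw(3)])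
    have "c * w * mat_adjoint c = (c * b) * z * mat_adjoint (c * b)"
      unfolding zw(4) using zw(1,3) c(1)
      by (intro congruence_mult) (auto simp: Borel_def hermitian_mats_carrier)
    also have "\<dots> = z"
      using c(2) hermitian_mats_carrier[OF zw(1)] by (simp add: mat_adjoint_one)
    finally show "(w, z) \<in> borel_congruent n" using borel_congruentI[OF zw(2) c(1)] by simp
  qed
  show "trans (borel_congruent n)"
  proof (rule transI)
    fix x y z assume "(x, y) \<in> borel_congruent n" "(y, z) \<in> borel_congruent n"
    then obtain b c where h: "x \<in> hermitian_mats n" "b \<in> Borel n" "y = b * x * mat_adjoint b"
      "c \<in> Borel n" "z = c * y * mat_adjoint c"
      unfolding borel_congruent_def by blast
    then have "z = (c * b) * x * mat_adjoint (c * b)"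
      by (auto simp: Borel_def hermitian_mats_carrier intro: congruence_mult)
    then show "(x, z) \<in> borel_congruent n"
      using borel_congruentI[OF h(1) Borel_mult[OF h(4,2)]] by simp
  qed
qed
lemma congruence_index:
  assumes "b \<in> carrier_mat n n" "z \<in> carrier_mat n n" "i < n" "j < n"
  shows "(b * z * mat_adjoint b) $$ (i, j) =
    (\<Sum>k<n. \<Sum>l<n. b $$ (i, k) * z $$ (k, l) * conjugate (b $$ (j, l)))"
proof -
  have "(b * z * mat_adjoint b) $$ (i, j) = (\<Sum>l<n. (b * z) $$ (i, l) * conjugate (b $$ (j, l)))"
    using assms by (subst index_mult_mat_sum[of _ n n _ n]) auto
  also have "\<dots> = (\<Sum>l<n. \<Sum>k<n. b $$ (i, k) * z $$ (k, l) * conjugate (b $$ (j, l)))"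
  proof (rule sum.cong[OF refl])
    fix l assume "l \<in> {..<n}"
    then show "(b * z) $$ (i, l) * conjugate (b $$ (j, l)) =
        (\<Sum>k<n. b $$ (i, k) * z $$ (k, l) * conjugate (b $$ (j, l)))"
      by (subst index_mult_mat_sum[OF assms(1,2,3)]) (auto simp: sum_distrib_right)
  qed
  also have "\<dots> = (\<Sum>k<n. \<Sum>l<n. b $$ (i, k) * z $$ (k, l) * conjugate (b $$ (j, l)))"
    by (rule sum.swap)
  finally show ?thesis .
qed

lemma congruence_addrow:
  assumes "z \<in> carrier_mat n n" "l < n"
  shows "addrow_mat n a k l * z * mat_adjoint (addrow_mat n a k l) =
    addcol (conjugate a) k l (addrow a k l z)"
proof -
  have "addrow_mat n a k l * z \<in> carrier_mat n n"
    by (rule mult_carrier_mat[OF addrow_mat_carrier assms(1)])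
  then show ?thesis
    using assms by (simp add: mat_adjoint_addrow_mat addrow_mat addcol_mat)
qed

lemma congruence_multrow:
  assumes "z \<in> carrier_mat n n"
  shows "multrow_mat n k a * z * mat_adjoint (multrow_mat n k a) =
    multcol k (conjugate a) (multrow k a z)"
proof -
  have "multrow_mat n k a * z \<in> carrier_mat n n"
    by (rule mult_carrier_mat[OF multrow_mat_carrier assms(1)])
  then show ?thesis
    using assms by (simp add: mat_adjoint_multrow_mat multrow_mat multcol_mat)
qed

lemma mat_delete_congruence:
  assumes b: "b \<in> carrier_mat (Suc m) (Suc m)" "upper_triangular b"
    and z: "z \<in> carrier_mat (Suc m) (Suc m)"
  shows "mat_delete (b * z * mat_adjoint b) 0 0 =
    mat_delete b 0 0 * mat_delete z 0 0 * mat_adjoint (mat_delete b 0 0)"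
proof (rule eq_matI)
  let ?b = "mat_delete b 0 0" and ?z = "mat_delete z 0 0"
  have c: "?b \<in> carrier_mat m m" "?z \<in> carrier_mat m m"
    using b(1) z by (auto simp: mat_delete_carrier[of _ "Suc m" "Suc m", simplified])
  fix i j assume "i < dim_row (?b * ?z * mat_adjoint ?b)" "j < dim_col (?b * ?z * mat_adjoint ?b)"
  then have ij: "i < m" "j < m" using c by auto
  have b0: "b $$ (Suc i', 0) = 0" if "i' < m" for i' using b that upper_triangularD[OF b(2)] by auto
  have "mat_delete (b * z * mat_adjoint b) 0 0 $$ (i, j) = (b * z * mat_adjoint b) $$ (Suc i, Suc j)"
    using ij b z by simp
  also have "\<dots> = (\<Sum>k<m. \<Sum>l<m. b $$ (Suc i, Suc k) * z $$ (Suc k, Suc l) * conjugate (b $$ (Suc j, Suc l)))"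
    using ij b0 by (simp add: congruence_index[OF b(1) z] sum.lessThan_Suc_shift del: sum.lessThan_Suc)
  also have "\<dots> = (?b * ?z * mat_adjoint ?b) $$ (i, j)"
    using ij b z by (simp add: congruence_index[OF c(1,2) ij])
  finally show "mat_delete (b * z * mat_adjoint b) 0 0 $$ (i, j) = (?b * ?z * mat_adjoint ?b) $$ (i, j)" .
qed (use b z in auto)

lemma hermitian_mat_delete:
  assumes "z \<in> hermitian_mats (Suc m)"
  shows "mat_delete z 0 0 \<in> hermitian_mats m"
proof -
  have z: "z \<in> carrier_mat (Suc m) (Suc m)" using assms by (rule hermitian_mats_carrier)
  have "mat_adjoint (mat_delete z 0 0) = mat_delete z 0 0"
    using z hermitian_mats_index[OF assms] by (intro eq_matI) auto
  then show ?thesis using z by (simp add: hermitian_mats_def mat_delete_carrier[of _ "Suc m" "Suc m", simplified])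
qed


section \<open>Normal forms\<close>

text \<open>The normal forms are the matrices of signed partial involutions: symmetric,
  with entries in \<open>{0, 1, -1}\<close>, at most one nonzero entry per row, and \<open>-1\<close> only on
  the diagonal.\<close>
definition normal_form :: "nat \<Rightarrow> 'a::ring_1 mat \<Rightarrow> bool" where
  "normal_form m N \<longleftrightarrow> N \<in> carrier_mat m m \<and> (\<forall>i<m. \<forall>j<m.
     N $$ (i, j) \<in> {0, 1, -1} \<and> N $$ (i, j) = N $$ (j, i) \<and> (i \<noteq> j \<longrightarrow> N $$ (i, j) \<noteq> -1) \<and>
     (\<forall>k<m. N $$ (i, j) \<noteq> 0 \<longrightarrow> N $$ (i, k) \<noteq> 0 \<longrightarrow> j = k))"

lemma normal_formI:
  assumes "N \<in> carrier_mat m m"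
    and "\<And>i j. i < m \<Longrightarrow> j < m \<Longrightarrow> N $$ (i, j) \<in> {0, 1, -1}"
    and "\<And>i j. i < m \<Longrightarrow> j < m \<Longrightarrow> N $$ (i, j) = N $$ (j, i)"
    and "\<And>i j. i < m \<Longrightarrow> j < m \<Longrightarrow> i \<noteq> j \<Longrightarrow> N $$ (i, j) \<noteq> -1"
    and "\<And>i j k. i < m \<Longrightarrow> j < m \<Longrightarrow> k < m \<Longrightarrow> N $$ (i, j) \<noteq> 0 \<Longrightarrow> N $$ (i, k) \<noteq> 0 \<Longrightarrow> j = k"
  shows "normal_form m N"
  using assms unfolding normal_form_def by blast

lemma normal_formD:
  assumes "normal_form m N"
  shows "N \<in> carrier_mat m m"
    and "\<And>i j. i < m \<Longrightarrow> j < m \<Longrightarrow> N $$ (i, j) \<in> {0, 1, -1}"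
    and "\<And>i j. i < m \<Longrightarrow> j < m \<Longrightarrow> N $$ (i, j) = N $$ (j, i)"
    and "\<And>i j. i < m \<Longrightarrow> j < m \<Longrightarrow> i \<noteq> j \<Longrightarrow> N $$ (i, j) \<noteq> -1"
    and "\<And>i j k. i < m \<Longrightarrow> j < m \<Longrightarrow> k < m \<Longrightarrow> N $$ (i, j) \<noteq> 0 \<Longrightarrow> N $$ (i, k) \<noteq> 0 \<Longrightarrow> j = k"
  using assms unfolding normal_form_def by blast+

definition normal_first_column :: "nat \<Rightarrow> 'a::ring_1 mat \<Rightarrow> bool" where
  "normal_first_column m N \<longleftrightarrow>
     (N $$ (0, 0) \<in> {0, 1, -1} \<and> (\<forall>k<m. N $$ (Suc k, 0) = 0)) \<or>
     (\<exists>K<m. N $$ (0, 0) = 0 \<and> N $$ (Suc K, 0) = 1 \<and> (\<forall>k<m. k \<noteq> K \<longrightarrow> N $$ (Suc k, 0) = 0) \<and>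
        (\<forall>l<m. N $$ (Suc K, Suc l) = 0))"

lemma normal_first_columnE:
  assumes "normal_first_column m N"
  obtains (zero) "N $$ (0, 0) \<in> {0, 1, -1}" "\<And>k. k < m \<Longrightarrow> N $$ (Suc k, 0) = 0"
    | (unit) K where "K < m" "N $$ (0, 0) = 0" "N $$ (Suc K, 0) = 1"
      "\<And>k. k < m \<Longrightarrow> k \<noteq> K \<Longrightarrow> N $$ (Suc k, 0) = 0" "\<And>l. l < m \<Longrightarrow> N $$ (Suc K, Suc l) = 0"
  using assms unfolding normal_first_column_def by blast

lemma normal_form_Suc_iff:
  fixes N :: "'a::ring_1 mat"
  assumes one: "(1::'a) \<noteq> -1"
  shows "normal_form (Suc m) N \<longleftrightarrow> N \<in> carrier_mat (Suc m) (Suc m) \<and>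
    normal_form m (mat_delete N 0 0) \<and> (\<forall>k<m. N $$ (0, Suc k) = N $$ (Suc k, 0)) \<and>
    normal_first_column m N"
    (is "?N \<longleftrightarrow> ?c \<and> ?L \<and> ?s \<and> ?F")
proof
  assume N: ?N
  note D = normal_formD[OF N]
  have ?L
    unfolding normal_form_def
  proof (intro conjI allI impI)
    show "mat_delete N 0 0 \<in> carrier_mat m m"
      using D(1) mat_delete_carrier[of N "Suc m" "Suc m"] by simp
    fix i j assume ij: "i < m" "j < m"
    then show "mat_delete N 0 0 $$ (i, j) \<in> {0, 1, -1}"
      "mat_delete N 0 0 $$ (i, j) = mat_delete N 0 0 $$ (j, i)"
      using D(1) D(2,3)[of "Suc i" "Suc j"] by auto
    show "mat_delete N 0 0 $$ (i, j) \<noteq> -1" if "i \<noteq> j"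
      using ij that D(1) D(4)[of "Suc i" "Suc j"] by auto
    fix k assume "k < m" "mat_delete N 0 0 $$ (i, j) \<noteq> 0" "mat_delete N 0 0 $$ (i, k) \<noteq> 0"
    then show "j = k"
      using ij D(1) D(5)[of "Suc i" "Suc j" "Suc k"] by auto
  qed
  moreover have ?F
  proof (cases "\<forall>k<m. N $$ (Suc k, 0) = 0")
    case True then show ?thesis using D(2) by (simp add: normal_first_column_def)
  next
    case False
    then obtain K where K: "K < m" "N $$ (Suc K, 0) \<noteq> 0" by auto
    have row0: "N $$ (0, Suc K) \<noteq> 0" using K D(3)[of 0 "Suc K"] by simp
    have "N $$ (Suc K, 0) = 1" using K D(2)[of "Suc K" 0] D(4)[of "Suc K" 0] by auto
    moreover have "N $$ (0, 0) = 0" using row0 K D(5)[of 0 "Suc K" 0] by auto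
    moreover have "N $$ (Suc k, 0) = 0" if "k < m" "k \<noteq> K" for k
      using that row0 K D(3)[of 0 "Suc k"] D(5)[of 0 "Suc k" "Suc K"] by auto
    moreover have "N $$ (Suc K, Suc l) = 0" if "l < m" for l
      using that K D(5)[of "Suc K" 0 "Suc l"] by auto
    ultimately show ?thesis using K(1) unfolding normal_first_column_def by blast
  qed
  ultimately show "?c \<and> ?L \<and> ?s \<and> ?F" using D(1,3) by auto
next
  assume "?c \<and> ?L \<and> ?s \<and> ?F"
  then have c: ?c and L: ?L and s: ?s and F: ?F by auto
  note D = normal_formD[OF L]
  have lower_vals: "N $$ (Suc i, Suc j) \<in> {0, 1, -1}"
    and lower_sym: "N $$ (Suc i, Suc j) = N $$ (Suc j, Suc i)"
    and lower_offdiag: "i \<noteq> j \<Longrightarrow> N $$ (Suc i, Suc j) \<noteq> -1"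
    and lower_unique: "\<And>k. k < m \<Longrightarrow> N $$ (Suc i, Suc j) \<noteq> 0 \<Longrightarrow> N $$ (Suc i, Suc k) \<noteq> 0 \<Longrightarrow> j = k"
    if "i < m" "j < m" for i j
    using that c D(2,3,4)[of i j] D(5)[of i j] by auto
  have row0: "N $$ (0, Suc k) = N $$ (Suc k, 0)" if "k < m" for k
    using s that by auto
  have diag0: "N $$ (0, 0) \<in> {0, 1, -1}"
    using F by (cases rule: normal_first_columnE) auto
  have col_vals: "N $$ (Suc i, 0) \<in> {0, 1}" if "i < m" for i
    using F
  proof (cases rule: normal_first_columnE)
    case (unit K) then show ?thesis using that by (cases "i = K") auto
  qed (use that in auto)
  have col_row: "N $$ (Suc i, Suc j) = 0" if "i < m" "j < m" "N $$ (Suc i, 0) \<noteq> 0" for i j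
    using F
  proof (cases rule: normal_first_columnE)
    case (unit K) then show ?thesis using that by (cases "i = K") auto
  qed (use that in auto)
  have col_unique: "i = j" if "i < Suc m" "j < Suc m" "N $$ (i, 0) \<noteq> 0" "N $$ (j, 0) \<noteq> 0" for i j
    using F
  proof (cases rule: normal_first_columnE)
    case zero then show ?thesis using that by (cases i; cases j) auto
  next
    case (unit K) then show ?thesis using that by (cases i; cases j) auto
  qed
  show ?N
    unfolding normal_form_def
  proof (intro conjI allI impI c)
    fix i j assume i: "i < Suc m" and j: "j < Suc m"
    show "N $$ (i, j) \<in> {0, 1, -1}"
      using i j diag0 col_vals row0 lower_vals by (cases i; cases j) auto
    show "N $$ (i, j) = N $$ (j, i)"
      using i j row0 lower_sym by (cases i; cases j) auto
    show "N $$ (i, j) \<noteq> -1" if "i \<noteq> j"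
      using i j that one row0 lower_offdiag by (cases i; cases j) (auto dest!: col_vals)
    fix k assume k: "k < Suc m" and nz: "N $$ (i, j) \<noteq> 0" "N $$ (i, k) \<noteq> 0"
    have col: "N $$ (l, 0) \<noteq> 0" if "l < Suc m" "N $$ (0, l) \<noteq> 0" for l
      using that row0 by (cases l) auto
    show "j = k"
    proof (cases i)
      case 0
      then show ?thesis using col_unique j k nz col by simp
    next
      case (Suc i')
      then show ?thesis
        using i j k nz col_row lower_unique by (cases j; cases k) auto
    qed
  qed
qed

section \<open>Uniqueness of the normal form\<close>

lemma one_nonneg_conjugatable: "(0::'a::conjugatable_ordered_field) \<le> 1"
  using conjugate_square_positive[of "1::'a"] by simp

lemma conjugate_square_neq_minus_one: "x * conjugate x \<noteq> (-1::'a::conjugatable_ordered_field)"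
proof
  assume "x * conjugate x = -1"
  then have "(0::'a) \<le> -1" using conjugate_square_positive[of x] by simp
  then have "(1::'a) \<le> 0" using add_right_mono[of 0 "-1" "1::'a"] by simp
  then show False using one_nonneg_conjugatable[where 'a='a] by (simp add: order_antisym)
qed

lemma two_neq_zero_conjugatable: "(2::'a::conjugatable_ordered_field) \<noteq> 0"
proof
  assume "(2::'a) = 0"
  moreover have "(1::'a) \<le> 2" using add_right_mono[OF one_nonneg_conjugatable, of "1::'a"] by simp
  ultimately show False using one_nonneg_conjugatable[where 'a='a] by (simp add: order_antisym)
qed

lemma one_neq_minus_one_conjugatable: "(1::'a::conjugatable_ordered_field) \<noteq> -1"
  using two_neq_zero_conjugatable[where 'a='a] by (simp add: eq_neg_iff_add_eq_0)

lemma sign_scaled_by_norm: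
  fixes x a :: "'a::conjugatable_ordered_field"
  assumes "x \<noteq> 0" "a \<in> {0, 1, -1}" "x * conjugate x * a \<in> {0, 1, -1}"
  shows "x * conjugate x * a = a"
  using assms conjugate_square_neq_minus_one[of x] by (auto simp: minus_equation_iff[of _ 1])

lemma congruence_first_column:
  assumes b: "b \<in> carrier_mat (Suc m) (Suc m)" "upper_triangular b"
    and z: "z \<in> carrier_mat (Suc m) (Suc m)"
  defines "w \<equiv> \<lambda>k. \<Sum>l<Suc m. z $$ (k, l) * conjugate (b $$ (0, l))"
  shows "\<And>i. i < m \<Longrightarrow> (b * z * mat_adjoint b) $$ (Suc i, 0) = (\<Sum>k<m. b $$ (Suc i, Suc k) * w (Suc k))"
    and "(b * z * mat_adjoint b) $$ (0, 0) = b $$ (0, 0) * w 0 + (\<Sum>k<m. b $$ (0, Suc k) * w (Suc k))"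
proof -
  have row: "(b * z * mat_adjoint b) $$ (i, 0) = (\<Sum>k<Suc m. b $$ (i, k) * w k)" if "i < Suc m" for i
    unfolding congruence_index[OF b(1) z that zero_less_Suc] w_def
    by (simp add: sum_distrib_left mult.assoc del: sum.lessThan_Suc)
  show "(b * z * mat_adjoint b) $$ (Suc i, 0) = (\<Sum>k<m. b $$ (Suc i, Suc k) * w (Suc k))" if "i < m" for i
    using row[of "Suc i"] that upper_triangularD[OF b(2), of 0 "Suc i"] b(1)
    by (simp add: sum.lessThan_Suc_shift del: sum.lessThan_Suc)
  show "(b * z * mat_adjoint b) $$ (0, 0) = b $$ (0, 0) * w 0 + (\<Sum>k<m. b $$ (0, Suc k) * w (Suc k))"
    using row[of 0] by (simp add: sum.lessThan_Suc_shift del: sum.lessThan_Suc)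
qed


lemma normal_form_first_column_unique:
  fixes n1 n2 :: "'a::conjugatable_ordered_field mat"
  assumes n1: "normal_form (Suc m) n1" and n2: "normal_form (Suc m) n2"
    and b: "b \<in> Borel (Suc m)" and cong: "n2 = b * n1 * mat_adjoint b"
    and lower: "mat_delete n1 0 0 = mat_delete n2 0 0"
  shows "n1 = n2"
proof -
  note one = one_neq_minus_one_conjugatable[where 'a='a]
  have c1: "n1 \<in> carrier_mat (Suc m) (Suc m)" and s1: "\<forall>k<m. n1 $$ (0, Suc k) = n1 $$ (Suc k, 0)"
    and F1: "normal_first_column m n1"
    using n1 by (simp_all add: normal_form_Suc_iff[OF one])
  have c2: "n2 \<in> carrier_mat (Suc m) (Suc m)" and s2: "\<forall>k<m. n2 $$ (0, Suc k) = n2 $$ (Suc k, 0)"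
    and F2: "normal_first_column m n2"
    using n2 by (simp_all add: normal_form_Suc_iff[OF one])
  have bc: "b \<in> carrier_mat (Suc m) (Suc m)" "upper_triangular b" using b by (auto simp: Borel_iff)
  have lower_eq: "n1 $$ (Suc k, Suc l) = n2 $$ (Suc k, Suc l)" if "k < m" "l < m" for k l
    using arg_cong[OF lower, of "\<lambda>M. M $$ (k, l)"] c1 c2 that by simp
  define x where "x = b $$ (0, 0)"
  have x: "x \<noteq> 0" using b by (simp add: Borel_iff x_def)
  define w where "w k = (\<Sum>l<Suc m. n1 $$ (k, l) * conjugate (b $$ (0, l)))" for k
  note col = congruence_first_column[OF bc c1, folded w_def cong]
  have w_Suc: "w (Suc k) = n1 $$ (Suc k, 0) * conjugate x +
      (\<Sum>l<m. n2 $$ (Suc k, Suc l) * conjugate (b $$ (0, Suc l)))" if "k < m" for k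
    using that lower_eq by (simp add: w_def x_def sum.lessThan_Suc_shift del: sum.lessThan_Suc)
  have w_free: "w (Suc k) = n1 $$ (Suc k, 0) * conjugate x"
    if "k < m" "\<And>l. l < m \<Longrightarrow> n2 $$ (Suc k, Suc l) = 0" for k
    using w_Suc that by simp
  have hit: "\<exists>r<m. w (Suc r) \<noteq> 0 \<and> n2 $$ (Suc r, 0) \<noteq> 0" if ex: "\<exists>s<m. w (Suc s) \<noteq> 0"
  proof -
    obtain r where "r < m" "w (Suc r) \<noteq> 0" "(\<Sum>s<m. mat_delete b 0 0 $$ (r, s) * w (Suc s)) \<noteq> 0"
      using Borel_mult_last_nonzero[OF mat_delete_Borel[OF b], where w="\<lambda>s. w (Suc s)"] ex by blast
    then show ?thesis using col(1)[of r] bc(1) by auto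
  qed
  have col_eq: "n1 $$ (0, 0) = n2 $$ (0, 0) \<and> (\<forall>k<m. n1 $$ (Suc k, 0) = n2 $$ (Suc k, 0))"
    using F1
  proof (cases rule: normal_first_columnE)
    case zero1: zero
    have w0: "w 0 = n1 $$ (0, 0) * conjugate x"
      using zero1 s1 by (simp add: w_def x_def sum.lessThan_Suc_shift del: sum.lessThan_Suc)
    show ?thesis
      using F2
    proof (cases rule: normal_first_columnE)
      case zero2: zero
      have "w (Suc k) = 0" if "k < m" for k
        using hit zero2(2) that by blast
      then have "n2 $$ (0, 0) = x * conjugate x * n1 $$ (0, 0)"
        using col(2) w0 by (simp add: x_def mult_ac)
      then show ?thesis
        using sign_scaled_by_norm[OF x zero1(1)] zero1(2) zero2 by simp
    next
      case (unit K)
      have "(\<Sum>k<m. b $$ (Suc K, Suc k) * w (Suc k)) \<noteq> 0" using col(1)[OF unit(1)] unit(3) by simp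
      then obtain r where "r < m" "w (Suc r) \<noteq> 0" "n2 $$ (Suc r, 0) \<noteq> 0"
        using hit by (metis (no_types, lifting) mult_zero_right sum.neutral lessThan_iff)
      moreover have "r = K" using unit(4) \<open>r < m\<close> \<open>n2 $$ (Suc r, 0) \<noteq> 0\<close> by blast
      ultimately show ?thesis using w_free[of K] unit(1,5) zero1(2) by simp
    qed
  next
    case unit1: (unit K1)
    have "w (Suc K1) = conjugate x"
      using w_free[OF unit1(1)] unit1(3,5) lower_eq[OF unit1(1)] by simp
    then obtain K2 where K2: "K2 < m" "w (Suc K2) \<noteq> 0" "n2 $$ (Suc K2, 0) \<noteq> 0"
      using hit unit1(1) x by fastforce
    show ?thesis
      using F2
    proof (cases rule: normal_first_columnE)
      case zero
      then show ?thesis using K2 by simp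
    next
      case (unit K)
      have "K2 = K" using unit(4) K2 by blast
      then have "n1 $$ (Suc K2, 0) \<noteq> 0" using w_free[OF K2(1)] unit(5) K2(2) by auto
      then have "K2 = K1" using unit1(4) K2(1) by blast
      then show ?thesis using unit1 unit \<open>K2 = K\<close> by (metis (no_types, lifting))
    qed
  qed
  show ?thesis
  proof (rule eq_matI)
    fix i j assume "i < dim_row n2" "j < dim_col n2"
    then have ij: "i < Suc m" "j < Suc m" using c2 by auto
    show "n1 $$ (i, j) = n2 $$ (i, j)"
      using ij col_eq s1 s2 lower_eq by (cases i; cases j) auto
  qed (use c1 c2 in auto)
qed


lemma normal_form_unique:
  fixes n1 n2 :: "'a::conjugatable_ordered_field mat"
  assumes "normal_form m n1" "normal_form m n2" "b \<in> Borel m" "n2 = b * n1 * mat_adjoint b"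
  shows "n1 = n2"
  using assms
proof (induction m arbitrary: n1 n2 b)
  case 0
  then show ?case by (intro eq_matI) (auto simp: normal_form_def)
next
  case (Suc m)
  note one = one_neq_minus_one_conjugatable[where 'a='a]
  have b: "b \<in> carrier_mat (Suc m) (Suc m)" "upper_triangular b" using Suc.prems(3) by (auto simp: Borel_iff)
  have "mat_delete n2 0 0 = mat_delete b 0 0 * mat_delete n1 0 0 * mat_adjoint (mat_delete b 0 0)"
    unfolding Suc.prems(4) using b Suc.prems(1) by (intro mat_delete_congruence) (auto simp: normal_form_def)
  then have "mat_delete n1 0 0 = mat_delete n2 0 0"
    using Suc.IH mat_delete_Borel[OF Suc.prems(3)] Suc.prems(1,2) by (auto simp: normal_form_Suc_iff[OF one])
  then show ?case using normal_form_first_column_unique Suc.prems by blast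
qed


section \<open>Existence of the normal form\<close>

lemma borel_congruent_trans:
  "(x, y) \<in> borel_congruent n \<Longrightarrow> (y, z) \<in> borel_congruent n \<Longrightarrow> (x, z) \<in> borel_congruent n"
  using equiv_borel_congruent[of n] by (auto elim!: equivE dest: transD)

definition first_column_support :: "nat \<Rightarrow> 'a::zero mat \<Rightarrow> nat set" where
  "first_column_support m N = {k. k < m \<and> N $$ (Suc k, 0) \<noteq> 0}"

lemma finite_first_column_support: "finite (first_column_support m N)"
  by (simp add: first_column_support_def)

text \<open>Adding a multiple of row \<open>p + 1\<close> to row \<open>0\<close> clears the entry of the first column in
  the row paired with \<open>p\<close>, and nothing else below the diagonal.\<close>
lemma clear_first_column_paired:
  fixes N :: "'a::conjugatable_field mat"
  assumes N: "N \<in> hermitian_mats (Suc m)" and L: "normal_form m (mat_delete N 0 0)"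
    and kp: "k < m" "p < m" "N $$ (Suc k, Suc p) \<noteq> 0"
  obtains N' where "(N, N') \<in> borel_congruent (Suc m)" "mat_delete N' 0 0 = mat_delete N 0 0"
    "first_column_support m N' = first_column_support m N - {k}"
proof -
  have c: "N \<in> carrier_mat (Suc m) (Suc m)" using N by (rule hermitian_mats_carrier)
  note D = normal_formD[OF L]
  define a where "a = conjugate (- N $$ (Suc k, 0) / N $$ (Suc k, Suc p))"
  define E where "E = addrow_mat (Suc m) a 0 (Suc p)"
  define N' where "N' = E * N * mat_adjoint E"
  have N': "N' = addcol (conjugate a) 0 (Suc p) (addrow a 0 (Suc p) N)"
    unfolding N'_def E_def using kp c by (intro congruence_addrow) auto
  have "(N, N') \<in> borel_congruent (Suc m)"
    unfolding N'_def E_def using kp by (intro borel_congruentI[OF N] addrow_mat_Borel) auto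
  moreover have "mat_delete N' 0 0 = mat_delete N 0 0"
    unfolding N' using c by (intro eq_matI) auto
  moreover have "N $$ (Suc i, Suc p) = 0" if "i < m" "i \<noteq> k" for i
    using that kp c D(3)[of i p] D(3)[of k p] D(5)[of p i k] by auto
  then have "N' $$ (Suc i, 0) = (if i = k then 0 else N $$ (Suc i, 0))" if "i < m" for i
    unfolding N' using that c kp by (auto simp: a_def conjugate_divide conjugate_neg)
  then have "first_column_support m N' = first_column_support m N - {k}"
    by (auto simp: first_column_support_def split: if_splits)
  ultimately show ?thesis by (rule that)
qed


text \<open>An entry of the first column in a row \<open>j + 1\<close> is cleared by a later row \<open>K + 1\<close>
  that vanishes in the lower right block; hermitian symmetry makes column \<open>K + 1\<close> vanish
  there too, so the lower right block is untouched.\<close>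
lemma clear_first_column_free:
  fixes N :: "'a::conjugatable_field mat"
  assumes N: "N \<in> hermitian_mats (Suc m)"
    and jK: "j < K" "K < m" "N $$ (Suc K, 0) \<noteq> 0"
    and free: "\<And>l. l < m \<Longrightarrow> N $$ (Suc K, Suc l) = 0"
  obtains N' where "(N, N') \<in> borel_congruent (Suc m)" "mat_delete N' 0 0 = mat_delete N 0 0"
    "first_column_support m N' = first_column_support m N - {j}"
proof -
  have c: "N \<in> carrier_mat (Suc m) (Suc m)" using N by (rule hermitian_mats_carrier)
  have free': "N $$ (Suc l, Suc K) = 0" if "l < m" for l
    using hermitian_mats_index[OF N, of "Suc l" "Suc K"] free[OF that] jK that by simp
  define a where "a = - N $$ (Suc j, 0) / N $$ (Suc K, 0)"
  define E where "E = addrow_mat (Suc m) a (Suc j) (Suc K)"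
  define N' where "N' = E * N * mat_adjoint E"
  have N': "N' = addcol (conjugate a) (Suc j) (Suc K) (addrow a (Suc j) (Suc K) N)"
    unfolding N'_def E_def using jK c by (intro congruence_addrow) auto
  have "(N, N') \<in> borel_congruent (Suc m)"
    unfolding N'_def E_def using jK by (intro borel_congruentI[OF N] addrow_mat_Borel) auto
  moreover have "mat_delete N' 0 0 = mat_delete N 0 0"
    unfolding N' using c jK free free' by (intro eq_matI) auto
  moreover have "N' $$ (Suc i, 0) = (if i = j then 0 else N $$ (Suc i, 0))" if "i < m" for i
    unfolding N' using that c jK by (auto simp: a_def)
  then have "first_column_support m N' = first_column_support m N - {j}"
    by (auto simp: first_column_support_def split: if_splits)
  ultimately show ?thesis by (rule that)
qed

lemma reduce_first_column:
  fixes N :: "'a::conjugatable_field mat"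
  assumes N: "N \<in> hermitian_mats (Suc m)" and L: "normal_form m (mat_delete N 0 0)"
  obtains N' where "(N, N') \<in> borel_congruent (Suc m)" "mat_delete N' 0 0 = mat_delete N 0 0"
    "\<And>k l. k \<in> first_column_support m N' \<Longrightarrow> l < m \<Longrightarrow> N' $$ (Suc k, Suc l) = 0"
    "card (first_column_support m N') \<le> 1"
  using N L
proof (induction "card (first_column_support m N)" arbitrary: N rule: less_induct)
  case less
  let ?S = "first_column_support m N"
  have step: thesis if "(N, N1) \<in> borel_congruent (Suc m)" "mat_delete N1 0 0 = mat_delete N 0 0"
    "first_column_support m N1 = ?S - {k}" "k \<in> ?S" for N1 k
  proof (rule less.hyps)
    show "card (first_column_support m N1) < card ?S"
      unfolding that(3) using card_Diff1_less[OF finite_first_column_support that(4)] .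
    show "N1 \<in> hermitian_mats (Suc m)" using that(1) borel_congruent_hermitian by blast
    show "normal_form m (mat_delete N1 0 0)" using that(2) less.prems(3) by simp
    fix N' assume N': "(N1, N') \<in> borel_congruent (Suc m)" "mat_delete N' 0 0 = mat_delete N1 0 0"
      "\<And>k l. k \<in> first_column_support m N' \<Longrightarrow> l < m \<Longrightarrow> N' $$ (Suc k, Suc l) = 0"
      "card (first_column_support m N') \<le> 1"
    show thesis
    proof (rule less.prems(1))
      show "(N, N') \<in> borel_congruent (Suc m)" using borel_congruent_trans[OF that(1) N'(1)] .
      show "mat_delete N' 0 0 = mat_delete N 0 0" using N'(2) that(2) by simp
    qed (use N' in auto)
  qed
  show thesis
  proof (cases "\<exists>k\<in>?S. \<exists>p<m. N $$ (Suc k, Suc p) \<noteq> 0")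
    case True
    then obtain k p where "k \<in> ?S" "p < m" "N $$ (Suc k, Suc p) \<noteq> 0" by blast
    then show ?thesis
      using clear_first_column_paired[OF less.prems(2,3)] step
      by (metis (no_types, lifting) first_column_support_def mem_Collect_eq)
  next
    case paired: False
    show ?thesis
    proof (cases "card ?S \<le> 1")
      case True
      then show ?thesis
        using paired less.prems(1) equiv_borel_congruent less.prems(2)
        by (metis equivE refl_onD)
    next
      case False
      then obtain a b where ab: "a \<in> ?S" "b \<in> ?S" "a \<noteq> b"
        by (metis card_le_Suc0_iff_eq finite_first_column_support One_nat_def)
      define j K where "j = min a b" and "K = max a b"
      have jK: "j < K" "j \<in> ?S" "K \<in> ?S" using ab by (auto simp: j_def K_def min_def max_def)
      then have K: "K < m" "N $$ (Suc K, 0) \<noteq> 0" by (auto simp: first_column_support_def)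
      have "N $$ (Suc K, Suc l) = 0" if "l < m" for l using paired jK(3) that by blast
      then obtain N1 where "(N, N1) \<in> borel_congruent (Suc m)" "mat_delete N1 0 0 = mat_delete N 0 0"
        "first_column_support m N1 = ?S - {j}"
        by (rule clear_first_column_free[OF less.prems(2) jK(1) K])
      then show ?thesis using step jK(2) by blast
    qed
  qed
qed


lemma normalize_first_column_zero:
  fixes N :: "'a::conjugatable_ordered_field mat"
  assumes normalizable: "\<And>a::'a. conjugate a = a \<Longrightarrow> a \<noteq> 0 \<Longrightarrow> \<exists>x. x * conjugate x * a \<in> {1, -1}"
    and N: "N \<in> hermitian_mats (Suc m)" and L: "normal_form m (mat_delete N 0 0)"
    and zero: "first_column_support m N = {}"
  obtains N' where "(N, N') \<in> borel_congruent (Suc m)" "normal_form (Suc m) N'"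
proof -
  have c: "N \<in> carrier_mat (Suc m) (Suc m)" using N by (rule hermitian_mats_carrier)
  have col: "N $$ (Suc k, 0) = 0" if "k < m" for k
    using zero that by (auto simp: first_column_support_def)
  have row: "N $$ (0, Suc k) = 0" if "k < m" for k
    using hermitian_mats_index[OF N, of 0 "Suc k"] col[OF that] that by simp
  obtain x where x: "x \<noteq> 0" "x * conjugate x * N $$ (0, 0) \<in> {0, 1, -1}"
  proof (cases "N $$ (0, 0) = 0")
    case False
    then obtain y where "y * conjugate y * N $$ (0, 0) \<in> {1, -1}"
      using normalizable[OF hermitian_mats_index[OF N, of 0 0]] by auto
    moreover from this have "y \<noteq> 0" by auto
    ultimately show ?thesis using that by blast
  qed (use that[of 1] in simp)
  define E where "E = multrow_mat (Suc m) 0 x"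
  define N' where "N' = E * N * mat_adjoint E"
  have N': "N' = multcol 0 (conjugate x) (multrow 0 x N)"
    unfolding N'_def E_def using c by (rule congruence_multrow)
  have rel: "(N, N') \<in> borel_congruent (Suc m)"
    unfolding N'_def E_def using x(1) by (intro borel_congruentI[OF N] multrow_mat_Borel)
  have "normal_form (Suc m) N'"
    unfolding normal_form_Suc_iff[OF one_neq_minus_one_conjugatable]
  proof (intro conjI)
    show "N' \<in> carrier_mat (Suc m) (Suc m)"
      using rel borel_congruent_hermitian hermitian_mats_carrier by blast
    have "mat_delete N' 0 0 = mat_delete N 0 0"
      unfolding N' using c by (intro eq_matI) auto
    then show "normal_form m (mat_delete N' 0 0)" using L by simp
    show "\<forall>k<m. N' $$ (0, Suc k) = N' $$ (Suc k, 0)"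
      unfolding N' using c row col by simp
    have "N' $$ (0, 0) = conjugate x * (x * N $$ (0, 0))"
      unfolding N' using c by simp
    then have "N' $$ (0, 0) \<in> {0, 1, -1}"
      using x(2) by (simp add: mult.assoc mult.left_commute)
    moreover have "\<forall>k<m. N' $$ (Suc k, 0) = 0"
      unfolding N' using c col by simp
    ultimately show "normal_first_column m N'"
      unfolding normal_first_column_def by blast
  qed
  with rel show ?thesis by (rule that)
qed


text \<open>Scale row \<open>K + 1\<close> to make the first column the unit vector, then clear the corner
  entry with row \<open>K + 1\<close>; the corner is self-conjugate, so half of it is removed from each
  side.\<close>
lemma normalize_first_column_unit:
  fixes N :: "'a::conjugatable_ordered_field mat"
  assumes N: "N \<in> hermitian_mats (Suc m)" and L: "normal_form m (mat_delete N 0 0)"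
    and K: "first_column_support m N = {K}"
    and free: "\<And>l. l < m \<Longrightarrow> N $$ (Suc K, Suc l) = 0"
  obtains N' where "(N, N') \<in> borel_congruent (Suc m)" "normal_form (Suc m) N'"
proof -
  have c: "N \<in> carrier_mat (Suc m) (Suc m)" using N by (rule hermitian_mats_carrier)
  have Km: "K < m" and NK: "N $$ (Suc K, 0) \<noteq> 0" and col: "\<And>k. k < m \<Longrightarrow> k \<noteq> K \<Longrightarrow> N $$ (Suc k, 0) = 0"
    using K by (auto simp: first_column_support_def set_eq_iff)
  have free': "N $$ (Suc l, Suc K) = 0" if "l < m" for l
    using hermitian_mats_index[OF N, of "Suc l" "Suc K"] free[OF that] Km that by simp
  define s where "s = 1 / N $$ (Suc K, 0)"
  define E1 where "E1 = multrow_mat (Suc m) (Suc K) s"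
  define N1 where "N1 = E1 * N * mat_adjoint E1"
  have N1: "N1 = multcol (Suc K) (conjugate s) (multrow (Suc K) s N)"
    unfolding N1_def E1_def using c by (rule congruence_multrow)
  have rel1: "(N, N1) \<in> borel_congruent (Suc m)"
    unfolding N1_def E1_def using NK by (intro borel_congruentI[OF N] multrow_mat_Borel) (simp add: s_def)
  then have H1: "N1 \<in> hermitian_mats (Suc m)" using borel_congruent_hermitian by blast
  have c1: "N1 \<in> carrier_mat (Suc m) (Suc m)" using H1 by (rule hermitian_mats_carrier)
  have lower1: "N1 $$ (Suc i, Suc j) = N $$ (Suc i, Suc j)" if "i < m" "j < m" for i j
    unfolding N1 using c that free free' by auto
  have col1: "N1 $$ (Suc k, 0) = (if k = K then 1 else 0)" if "k < m" for k
    unfolding N1 using c that NK col by (auto simp: s_def)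
  have corner1: "N1 $$ (0, 0) = N $$ (0, 0)" unfolding N1 using c by simp
  define t where "t = - N1 $$ (0, 0) / 2"
  define E2 where "E2 = addrow_mat (Suc m) t 0 (Suc K)"
  define N2 where "N2 = E2 * N1 * mat_adjoint E2"
  have N2: "N2 = addcol (conjugate t) 0 (Suc K) (addrow t 0 (Suc K) N1)"
    unfolding N2_def E2_def using c1 Km by (intro congruence_addrow) auto
  have rel2: "(N1, N2) \<in> borel_congruent (Suc m)"
    unfolding N2_def E2_def using Km by (intro borel_congruentI[OF H1] addrow_mat_Borel) auto
  have row1: "N1 $$ (0, Suc k) = (if k = K then 1 else 0)" if "k < m" for k
    using hermitian_mats_index[OF H1, of 0 "Suc k"] col1[OF that] that by (cases "k = K") auto
  have "conjugate (2::'a) = 2" using conjugate_dist_add[of "1::'a" 1] by simp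
  then have "N1 $$ (0, 0) + t + conjugate t = 0"
    using hermitian_mats_index[OF H1, of 0 0] two_neq_zero_conjugatable[where 'a='a]
    by (simp add: t_def conjugate_divide conjugate_neg field_simps)
  then have corner2: "N2 $$ (0, 0) = 0"
    unfolding N2 using c1 Km col1[OF Km] row1[OF Km] lower1[OF Km Km] free[OF Km] by (simp add: ac_simps)
  have "normal_form (Suc m) N2"
    unfolding normal_form_Suc_iff[OF one_neq_minus_one_conjugatable]
  proof (intro conjI)
    show "N2 \<in> carrier_mat (Suc m) (Suc m)"
      using rel2 borel_congruent_hermitian hermitian_mats_carrier by blast
    have "mat_delete N2 0 0 = mat_delete N 0 0"
      unfolding N2 using c c1 lower1 by (intro eq_matI) auto
    then show "normal_form m (mat_delete N2 0 0)" using L by simp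
    show "\<forall>k<m. N2 $$ (0, Suc k) = N2 $$ (Suc k, 0)"
      unfolding N2 using c1 Km row1 col1 lower1 free free' by auto
    show "normal_first_column m N2"
      unfolding normal_first_column_def N2 using c1 Km col1 lower1 free free' corner2[unfolded N2] by auto
  qed
  moreover have "(N, N2) \<in> borel_congruent (Suc m)" using borel_congruent_trans[OF rel1 rel2] .
  ultimately show ?thesis using that by blast
qed


lemma normal_form_exists:
  fixes z :: "'a::conjugatable_ordered_field mat"
  assumes normalizable: "\<And>a::'a. conjugate a = a \<Longrightarrow> a \<noteq> 0 \<Longrightarrow> \<exists>x. x * conjugate x * a \<in> {1, -1}"
    and "z \<in> hermitian_mats m"
  shows "\<exists>N. (z, N) \<in> borel_congruent m \<and> normal_form m N"
  using assms(2)
proof (induction m arbitrary: z)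
  case 0
  then have "(z, z) \<in> borel_congruent 0"
    using equiv_borel_congruent by (metis equivE refl_onD)
  moreover have "normal_form 0 z" using 0 by (simp add: normal_form_def hermitian_mats_def)
  ultimately show ?case by blast
next
  case (Suc m)
  have c: "z \<in> carrier_mat (Suc m) (Suc m)" using Suc.prems by (rule hermitian_mats_carrier)
  obtain N' where "(mat_delete z 0 0, N') \<in> borel_congruent m" and L: "normal_form m N'"
    using Suc.IH[OF hermitian_mat_delete[OF Suc.prems]] by blast
  then obtain b' where b': "b' \<in> Borel m" "N' = b' * mat_delete z 0 0 * mat_adjoint b'"
    by (auto simp: borel_congruent_def)
  obtain b where b: "b \<in> Borel (Suc m)" "mat_delete b 0 0 = b'" by (rule Borel_extend[OF b'(1)])
  define z1 where "z1 = b * z * mat_adjoint b"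
  have rel1: "(z, z1) \<in> borel_congruent (Suc m)"
    unfolding z1_def using borel_congruentI[OF Suc.prems b(1)] .
  have H1: "z1 \<in> hermitian_mats (Suc m)" using rel1 borel_congruent_hermitian by blast
  have "mat_delete z1 0 0 = N'"
    unfolding z1_def b'(2) b(2)[symmetric] using b(1) c by (intro mat_delete_congruence) (auto simp: Borel_iff)
  then have L1: "normal_form m (mat_delete z1 0 0)" using L by simp
  obtain z2 where rel2: "(z1, z2) \<in> borel_congruent (Suc m)" and L2: "mat_delete z2 0 0 = mat_delete z1 0 0"
    and free: "\<And>k l. k \<in> first_column_support m z2 \<Longrightarrow> l < m \<Longrightarrow> z2 $$ (Suc k, Suc l) = 0"
    and card: "card (first_column_support m z2) \<le> 1"
    using reduce_first_column[OF H1 L1] by blast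
  have H2: "z2 \<in> hermitian_mats (Suc m)" using rel2 borel_congruent_hermitian by blast
  have L2': "normal_form m (mat_delete z2 0 0)" using L1 L2 by simp
  obtain z3 where rel3: "(z2, z3) \<in> borel_congruent (Suc m)" and "normal_form (Suc m) z3"
  proof (cases "first_column_support m z2 = {}")
    case True
    show ?thesis by (rule normalize_first_column_zero[OF normalizable H2 L2' True that])
  next
    case False
    then have "card (first_column_support m z2) = 1"
      using card card_0_eq[OF finite_first_column_support, of m z2] by (simp add: le_Suc_eq)
    then obtain K where K: "first_column_support m z2 = {K}" by (rule card_1_singletonE)
    show ?thesis by (rule normalize_first_column_unit[OF H2 L2' K free[unfolded K] that]) simp
  qed
  then show ?case using borel_congruent_trans[OF rel1 borel_congruent_trans[OF rel2 rel3]] by blast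
qed


section \<open>Normal forms and signed partial involutions\<close>

lemma even_card_fixpoint_free_involution:
  assumes "finite A" "\<And>x. x \<in> A \<Longrightarrow> f x \<in> A \<and> f (f x) = x \<and> f x \<noteq> x"
  shows "even (card A)"
  using assms
proof (induction "card A" arbitrary: A rule: less_induct)
  case less
  show ?case
  proof (cases "A = {}")
    case True then show ?thesis by simp
  next
    case False
    then obtain a where a: "a \<in> A" by auto
    have fa: "f a \<in> A" "f a \<noteq> a" "f (f a) = a" using less.prems(2)[OF a] by auto
    define A' where "A' = A - {a, f a}"
    have "card {a, f a} \<le> card A" using less.prems(1) a fa by (intro card_mono) auto
    then have c2: "2 \<le> card A" using fa by simp
    have "card A' = card A - card {a, f a}"
      using less.prems(1) a fa unfolding A'_def by (intro card_Diff_subset) auto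
    then have cA: "card A = card A' + 2" using c2 fa by simp
    have "\<And>x. x \<in> A' \<Longrightarrow> f x \<in> A' \<and> f (f x) = x \<and> f x \<noteq> x"
    proof -
      fix x assume x: "x \<in> A'"
      then have xA: "x \<in> A" "x \<noteq> a" "x \<noteq> f a" unfolding A'_def by auto
      have p: "f x \<in> A" "f (f x) = x" "f x \<noteq> x" using less.prems(2)[OF xA(1)] by auto
      have "f x \<noteq> a"
      proof
        assume "f x = a" then have "f (f x) = f a" by simp
        then show False using p xA by simp
      qed
      moreover have "f x \<noteq> f a"
      proof
        assume "f x = f a" then have "f (f x) = f (f a)" by simp
        then show False using p xA fa by simp
      qed
      ultimately show "f x \<in> A' \<and> f (f x) = x \<and> f x \<noteq> x" using p unfolding A'_def by auto
    qed
    moreover have "finite A'" using less.prems(1) unfolding A'_def by auto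
    ultimately have "even (card A')" using less.hyps[of A'] cA by auto
    then show ?thesis using cA by simp
  qed
qed

definition nth_elem :: "nat set \<Rightarrow> nat \<Rightarrow> nat" where
  "nth_elem J i = sorted_list_of_set J ! (i - 1)"

definition elem_index :: "nat set \<Rightarrow> nat \<Rightarrow> nat" where
  "elem_index J x = the_inv_into {1..card J} (nth_elem J) x"

lemma bij_betw_nth_elem:
  assumes "finite J"
  shows "bij_betw (nth_elem J) {1..card J} J"
proof -
  let ?xs = "sorted_list_of_set J"
  have b1: "bij_betw ((!) ?xs) {..<card J} J"
    by (rule bij_betw_nth) (use assms in simp_all)
  have b2: "bij_betw (\<lambda>i. i - 1) {1..card J} {..<card J}"
  proof (rule bij_betw_byWitness[where f'=Suc])
    show "\<forall>a\<in>{1..card J}. Suc (a - 1) = a" by auto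
    show "\<forall>a\<in>{..<card J}. Suc a - 1 = a" by auto
    show "(\<lambda>i. i - 1) ` {1..card J} \<subseteq> {..<card J}" by auto
    show "Suc ` {..<card J} \<subseteq> {1..card J}" by auto
  qed
  have "bij_betw ((!) ?xs \<circ> (\<lambda>i. i - 1)) {1..card J} J"
    by (rule bij_betw_trans[OF b2 b1])
  moreover have "(!) ?xs \<circ> (\<lambda>i. i - 1) = nth_elem J" unfolding nth_elem_def by (rule ext) simp
  ultimately show ?thesis by simp
qed

lemma nth_elem_in: assumes "finite J" "i \<in> {1..card J}" shows "nth_elem J i \<in> J"
  using bij_betwE[OF bij_betw_nth_elem[OF assms(1)]] assms(2) by blast

lemma elem_index_in: assumes "finite J" "x \<in> J" shows "elem_index J x \<in> {1..card J}"
  using bij_betwE[OF bij_betw_the_inv_into[OF bij_betw_nth_elem[OF assms(1)]]] assms(2) unfolding elem_index_def by blast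

lemma nth_elem_elem_index: assumes "finite J" "x \<in> J" shows "nth_elem J (elem_index J x) = x"
proof -
  have b: "bij_betw (nth_elem J) {1..card J} J" using bij_betw_nth_elem[OF assms(1)] .
  have "inj_on (nth_elem J) {1..card J}" "x \<in> nth_elem J ` {1..card J}"
    using b assms(2) unfolding bij_betw_def by auto
  then show ?thesis unfolding elem_index_def by (rule f_the_inv_into_f)
qed

lemma elem_index_nth_elem: assumes "finite J" "i \<in> {1..card J}" shows "elem_index J (nth_elem J i) = i"
proof -
  have b: "bij_betw (nth_elem J) {1..card J} J" using bij_betw_nth_elem[OF assms(1)] .
  have "inj_on (nth_elem J) {1..card J}" using b unfolding bij_betw_def by auto
  then show ?thesis unfolding elem_index_def using assms(2) by (rule the_inv_into_f_f)
qed

lemma elem_index_inj: assumes "finite J" "x \<in> J" "y \<in> J" "elem_index J x = elem_index J y" shows "x = y"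
proof -
  have "x = nth_elem J (elem_index J x)" using nth_elem_elem_index[OF assms(1,2)] by simp
  also have "\<dots> = nth_elem J (elem_index J y)" using assms(4) by simp
  also have "\<dots> = y" using nth_elem_elem_index[OF assms(1,3)] .
  finally show ?thesis .
qed

definition gamma_entry :: "gval \<Rightarrow> nat \<Rightarrow> nat \<Rightarrow> 'a::ring_1" where
  "gamma_entry g i j = (case g of Idx k \<Rightarrow> if k = j then 1 else 0 | Pl \<Rightarrow> if i = j then 1 else 0
       | Mi \<Rightarrow> if i = j then -1 else 0)"

lemma GammaD:
  assumes "\<gamma> \<in> Gamma p q"
  shows "\<And>i. i \<in> {1..p+q} \<Longrightarrow> \<gamma> i \<in> Idx ` {1..p+q} \<union> {Pl, Mi}"
    and "\<And>i j. i \<in> {1..p+q} \<Longrightarrow> \<gamma> i = Idx j \<Longrightarrow> i \<noteq> j \<and> \<gamma> j = Idx i \<and> j \<in> {1..p+q}"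
    and "\<And>i. i \<notin> {1..p+q} \<Longrightarrow> \<gamma> i = undefined"
    and "int (card {i \<in> {1..p+q}. \<gamma> i = Pl}) - int (card {i \<in> {1..p+q}. \<gamma> i = Mi}) = int p - int q"
proof -
  note G = assms[unfolded Gamma_def mem_Collect_eq]
  note G1 = conjunct1[OF G] and G2 = conjunct1[OF conjunct2[OF G]] and G3 = conjunct2[OF conjunct2[OF G]]
  show A: "\<And>i. i \<in> {1..p+q} \<Longrightarrow> \<gamma> i \<in> Idx ` {1..p+q} \<union> {Pl, Mi}"
    using G1 by (rule PiE_mem)
  show "\<And>i j. i \<in> {1..p+q} \<Longrightarrow> \<gamma> i = Idx j \<Longrightarrow> i \<noteq> j \<and> \<gamma> j = Idx i \<and> j \<in> {1..p+q}"
  proof -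
    fix i j assume i: "i \<in> {1..p+q}" and g: "\<gamma> i = Idx j"
    have "i \<noteq> j \<and> \<gamma> j = Idx i" using bspec[OF G2 i] g by blast
    moreover have "j \<in> {1..p+q}" using A[OF i] g by auto
    ultimately show "i \<noteq> j \<and> \<gamma> j = Idx i \<and> j \<in> {1..p+q}" by blast
  qed
  show "\<And>i. i \<notin> {1..p+q} \<Longrightarrow> \<gamma> i = undefined"
    by (rule PiE_arb[OF G1])
  show "int (card {i \<in> {1..p+q}. \<gamma> i = Pl}) - int (card {i \<in> {1..p+q}. \<gamma> i = Mi}) = int p - int q"
    using G3 .
qed


lemma gamma_entry_values: "gamma_entry g i j \<in> {0, 1, -1}"
  unfolding gamma_entry_def by (cases g) auto

lemma gamma_entry_nonzero: "gamma_entry g i j \<noteq> 0 \<Longrightarrow> j = (case g of Idx k \<Rightarrow> k | _ \<Rightarrow> i)"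
  unfolding gamma_entry_def by (cases g) (auto split: if_splits)

lemma gamma_entry_minus_one: "(1::'a::ring_1) \<noteq> -1 \<Longrightarrow> gamma_entry g i j = (-1::'a) \<Longrightarrow> i = j"
  unfolding gamma_entry_def by (cases g) (auto split: if_splits)

lemma gamma_entry_sym:
  assumes g: "\<gamma> \<in> Gamma p q" and i: "i \<in> {1..p+q}" and j: "j \<in> {1..p+q}"
  shows "gamma_entry (\<gamma> i) i j = gamma_entry (\<gamma> j) j i"
proof -
  note G = GammaD[OF g]
  show ?thesis
  proof (cases "\<gamma> i")
    case (Idx k)
    have k: "k \<noteq> i" "\<gamma> k = Idx i" using G(2)[OF i Idx] by auto
    show ?thesis
    proof (cases "k = j")
      case True then show ?thesis using Idx k by (simp add: gamma_entry_def)
    next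
      case False
      have "gamma_entry (\<gamma> j) j i = 0"
      proof (cases "\<gamma> j")
        case (Idx k')
        have "k' \<noteq> i"
        proof
          assume "k' = i"
          then have "\<gamma> i = Idx j" using G(2)[OF j Idx] by auto
          then show False using \<open>\<gamma> i = Idx k\<close> False by simp
        qed
        then show ?thesis using Idx by (simp add: gamma_entry_def)
      next
        case Pl
        then have "j \<noteq> i" using \<open>\<gamma> i = Idx k\<close> by auto
        then show ?thesis using Pl by (simp add: gamma_entry_def)
      next
        case Mi
        then have "j \<noteq> i" using \<open>\<gamma> i = Idx k\<close> by auto
        then show ?thesis using Mi by (simp add: gamma_entry_def)
      qed
      then show ?thesis using Idx False by (simp add: gamma_entry_def)
    qed
  next
    case Pl
    show ?thesis
    proof (cases "i = j")
      case True then show ?thesis by simp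
    next
      case False
      have "gamma_entry (\<gamma> j) j i = 0"
      proof (cases "\<gamma> j")
        case (Idx k')
        have "k' \<noteq> i" using G(2)[OF j Idx] Pl by auto
        then show ?thesis using Idx by (simp add: gamma_entry_def)
      qed (use False in \<open>auto simp: gamma_entry_def\<close>)
      then show ?thesis using Pl False by (simp add: gamma_entry_def)
    qed
  next
    case Mi
    show ?thesis
    proof (cases "i = j")
      case True then show ?thesis by simp
    next
      case False
      have "gamma_entry (\<gamma> j) j i = 0"
      proof (cases "\<gamma> j")
        case (Idx k')
        have "k' \<noteq> i" using G(2)[OF j Idx] Mi by auto
        then show ?thesis using Idx by (simp add: gamma_entry_def)
      qed (use False in \<open>auto simp: gamma_entry_def\<close>)
      then show ?thesis using Mi False by (simp add: gamma_entry_def)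
    qed
  qed
qed

definition mat_of_coprod :: "nat \<Rightarrow> nat \<times> nat \<times> nat set \<times> (nat \<Rightarrow> gval) \<Rightarrow> 'a::ring_1 mat" where
  "mat_of_coprod m x = (case x of (p, q, J, \<gamma>) \<Rightarrow> mat m m (\<lambda>(r,c). if Suc r \<in> J \<and> Suc c \<in> J then
      gamma_entry (\<gamma> (elem_index J (Suc r))) (elem_index J (Suc r)) (elem_index J (Suc c)) else 0))"

lemma index_mat_of_coprod: "r < m \<Longrightarrow> c < m \<Longrightarrow> mat_of_coprod m (p, q, J, \<gamma>) $$ (r,c) = (if Suc r \<in> J \<and> Suc c \<in> J then
      gamma_entry (\<gamma> (elem_index J (Suc r))) (elem_index J (Suc r)) (elem_index J (Suc c)) else 0)"
  unfolding mat_of_coprod_def by simp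

lemma CoprodD:
  assumes "(p, q, J, \<gamma>) \<in> Coprod m"
  shows "p + q \<le> m" "J \<subseteq> {1..m}" "card J = p + q" "\<gamma> \<in> Gamma p q" "finite J"
  using assms unfolding Coprod_def by (auto intro: finite_subset)

lemma normal_form_mat_of_coprod:
  assumes x: "(p, q, J, \<gamma>) \<in> Coprod m" and one: "(1::'a::ring_1) \<noteq> -1"
  shows "normal_form m (mat_of_coprod m (p, q, J, \<gamma>) :: 'a mat)"
proof -
  note C = CoprodD[OF x]
  let ?N = "mat_of_coprod m (p, q, J, \<gamma>) :: 'a mat"
  have ixJ: "\<And>y. y \<in> J \<Longrightarrow> elem_index J y \<in> {1..p+q}" using elem_index_in[OF C(5)] C(3) by auto
  show ?thesis
  proof (rule normal_formI)
    show "?N \<in> carrier_mat m m" by (simp add: mat_of_coprod_def)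
    fix r c assume r: "r < m" and c: "c < m"
    have "gamma_entry (\<gamma> (elem_index J (Suc r))) (elem_index J (Suc r)) (elem_index J (Suc c)) \<in> {0,1,-1::'a}" by (rule gamma_entry_values)
    then show "?N $$ (r,c) \<in> {0,1,-1}" using r c by (simp add: index_mat_of_coprod)
    show "?N $$ (r,c) = ?N $$ (c,r)" using r c gamma_entry_sym[where 'a='a, OF C(4) ixJ ixJ] by (simp add: index_mat_of_coprod)
    show "?N $$ (r,c) \<noteq> -1" if rc: "r \<noteq> c"
    proof
      assume h: "?N $$ (r,c) = -1"
      then have J: "Suc r \<in> J" "Suc c \<in> J" using r c by (auto simp: index_mat_of_coprod split: if_splits)
      then have "elem_index J (Suc r) = elem_index J (Suc c)" using h r c gamma_entry_minus_one[OF one] by (simp add: index_mat_of_coprod)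
      then show False using elem_index_inj[OF C(5) J] rc by simp
    qed
    fix k assume k: "k < m" and nz: "?N $$ (r,c) \<noteq> 0" "?N $$ (r,k) \<noteq> 0"
    then have J: "Suc r \<in> J" "Suc c \<in> J" "Suc k \<in> J" using r c by (auto simp: index_mat_of_coprod split: if_splits)
    have "elem_index J (Suc c) = elem_index J (Suc k)" using nz r c k J gamma_entry_nonzero[where 'a='a] by (simp add: index_mat_of_coprod) metis
    then show "c = k" using elem_index_inj[OF C(5) J(2,3)] by simp
  qed

qed


definition nonzero_rows :: "nat \<Rightarrow> 'a::ring_1 mat \<Rightarrow> nat set" where
  "nonzero_rows m N = {x. x \<in> {1..m} \<and> (\<exists>c<m. N $$ (x - 1, c) \<noteq> 0)}"

definition row_gamma :: "nat \<Rightarrow> 'a::ring_1 mat \<Rightarrow> nat set \<Rightarrow> nat \<Rightarrow> gval" where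
  "row_gamma m N J i = (let r = nth_elem J i - 1 in if N $$ (r,r) = 1 then Pl else if N $$ (r,r) = -1 then Mi
     else Idx (elem_index J (Suc (SOME c. c < m \<and> N $$ (r,c) \<noteq> 0))))"

definition coprod_of_mat :: "nat \<Rightarrow> 'a::ring_1 mat \<Rightarrow> nat \<times> nat \<times> nat set \<times> (nat \<Rightarrow> gval)" where
  "coprod_of_mat m N = (let J = nonzero_rows m N; n = card J; \<gamma> = restrict (row_gamma m N J) {1..n};
      P = card {i \<in> {1..n}. \<gamma> i = Pl}; M = card {i \<in> {1..n}. \<gamma> i = Mi}
    in (P + (n - P - M) div 2, M + (n - P - M) div 2, J, \<gamma>))"

lemma mat_of_coprod_row_nonzero_iff:
  assumes x: "(p, q, J, \<gamma>) \<in> Coprod m" and r: "r < m" and one: "(1::'a::ring_1) \<noteq> -1"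
  shows "(\<exists>c<m. (mat_of_coprod m (p, q, J, \<gamma>) :: 'a mat) $$ (r,c) \<noteq> 0) \<longleftrightarrow> Suc r \<in> J"
proof
  assume "\<exists>c<m. (mat_of_coprod m (p, q, J, \<gamma>) :: 'a mat) $$ (r,c) \<noteq> 0"
  then show "Suc r \<in> J" using r by (auto simp: index_mat_of_coprod split: if_splits)
next
  assume rJ: "Suc r \<in> J"
  note C = CoprodD[OF x]
  define i where "i = elem_index J (Suc r)"
  have i: "i \<in> {1..p+q}" using elem_index_in[OF C(5) rJ] C(3) unfolding i_def by simp
  show "\<exists>c<m. (mat_of_coprod m (p, q, J, \<gamma>) :: 'a mat) $$ (r,c) \<noteq> 0"
  proof (cases "\<gamma> i")
    case (Idx k)
    have k: "k \<in> {1..p+q}" using GammaD(2)[OF C(4) i Idx] by auto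
    have eJ: "nth_elem J k \<in> J" using nth_elem_in[OF C(5)] k C(3) by simp
    then have ek: "1 \<le> nth_elem J k" "nth_elem J k \<le> m" using C(2) by auto
    define c where "c = nth_elem J k - 1"
    have c: "c < m" "Suc c = nth_elem J k" using ek unfolding c_def by auto
    have "elem_index J (Suc c) = k" using c(2) elem_index_nth_elem[OF C(5)] k C(3) by simp
    then have "(mat_of_coprod m (p, q, J, \<gamma>) :: 'a mat) $$ (r,c) = 1"
      using r c rJ eJ Idx unfolding i_def by (simp add: index_mat_of_coprod gamma_entry_def)
    then show ?thesis using c by auto
  next
    case Pl
    then have "(mat_of_coprod m (p, q, J, \<gamma>) :: 'a mat) $$ (r,r) = 1"
      using r rJ unfolding i_def by (simp add: index_mat_of_coprod gamma_entry_def)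
    then show ?thesis using r by auto
  next
    case Mi
    then have "(mat_of_coprod m (p, q, J, \<gamma>) :: 'a mat) $$ (r,r) = -1"
      using r rJ unfolding i_def by (simp add: index_mat_of_coprod gamma_entry_def)
    then show ?thesis using r by auto
  qed
qed

lemma nonzero_rows_mat_of_coprod:
  assumes x: "(p, q, J, \<gamma>) \<in> Coprod m" and one: "(1::'a::ring_1) \<noteq> -1"
  shows "nonzero_rows m (mat_of_coprod m (p, q, J, \<gamma>) :: 'a mat) = J"
proof -
  note C = CoprodD[OF x]
  have "y \<in> nonzero_rows m (mat_of_coprod m (p, q, J, \<gamma>) :: 'a mat) \<longleftrightarrow> y \<in> J" for y
  proof (cases "y \<in> {1..m}")
    case True
    then obtain r where r: "y = Suc r" "r < m" by (cases y) auto
    show ?thesis using mat_of_coprod_row_nonzero_iff[OF x r(2) one] r unfolding nonzero_rows_def by auto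
  next
    case False
    then show ?thesis using C(2) unfolding nonzero_rows_def by auto
  qed
  then show ?thesis by blast
qed

lemma row_gamma_mat_of_coprod:
  assumes x: "(p, q, J, \<gamma>) \<in> Coprod m" and one: "(1::'a::ring_1) \<noteq> -1" and i: "i \<in> {1..p+q}"
  shows "row_gamma m (mat_of_coprod m (p, q, J, \<gamma>) :: 'a mat) J i = \<gamma> i"
proof -
  note C = CoprodD[OF x]
  let ?N = "mat_of_coprod m (p, q, J, \<gamma>) :: 'a mat"
  have eJ: "nth_elem J i \<in> J" using nth_elem_in[OF C(5)] i C(3) by simp
  then have ek: "1 \<le> nth_elem J i" "nth_elem J i \<le> m" using C(2) by auto
  define r where "r = nth_elem J i - 1"
  have r: "r < m" "Suc r = nth_elem J i" "Suc r \<in> J" using ek eJ unfolding r_def by auto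
  have ixr: "elem_index J (Suc r) = i" using r(2) elem_index_nth_elem[OF C(5)] i C(3) by simp
  have Nrr: "?N $$ (r,r) = gamma_entry (\<gamma> i) i i" using r ixr by (simp add: index_mat_of_coprod)
  show ?thesis
  proof (cases "\<gamma> i")
    case (Idx k)
    have k: "k \<in> {1..p+q}" "k \<noteq> i" using GammaD(2)[OF C(4) i Idx] by auto
    have N0: "?N $$ (r,r) = 0" using Nrr Idx k by (simp add: gamma_entry_def)
    have eJk: "nth_elem J k \<in> J" using nth_elem_in[OF C(5)] k C(3) by simp
    then have ekk: "1 \<le> nth_elem J k" "nth_elem J k \<le> m" using C(2) by auto
    define c0 where "c0 = nth_elem J k - 1"
    have c0: "c0 < m" "Suc c0 = nth_elem J k" using ekk unfolding c0_def by auto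
    have ixc0: "elem_index J (Suc c0) = k" using c0(2) elem_index_nth_elem[OF C(5)] k C(3) by simp
    have "?N $$ (r,c0) = 1" using r c0 eJk ixr ixc0 Idx by (simp add: index_mat_of_coprod gamma_entry_def)
    then have ex: "\<exists>c. c < m \<and> ?N $$ (r,c) \<noteq> 0" using c0 by auto
    define c where "c = (SOME c. c < m \<and> ?N $$ (r,c) \<noteq> 0)"
    have c: "c < m" "?N $$ (r,c) \<noteq> 0" using someI_ex[OF ex] unfolding c_def by auto
    then have cJ: "Suc c \<in> J" using r by (auto simp: index_mat_of_coprod split: if_splits)
    then have "gamma_entry (\<gamma> i) i (elem_index J (Suc c)) \<noteq> (0::'a)" using c r ixr by (simp add: index_mat_of_coprod)
    then have "elem_index J (Suc c) = k" using gamma_entry_nonzero Idx by fastforce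
    then have "row_gamma m ?N J i = Idx k"
      unfolding row_gamma_def Let_def using N0 one r_def c_def by (simp add: r_def[symmetric] c_def[symmetric])
    then show ?thesis using Idx by simp
  next
    case Pl
    then show ?thesis using Nrr unfolding row_gamma_def Let_def r_def by (simp add: gamma_entry_def)
  next
    case Mi
    then have "?N $$ (r,r) = -1" using Nrr by (simp add: gamma_entry_def)
    then show ?thesis using Mi one unfolding row_gamma_def Let_def r_def by (metis (no_types, lifting))
  qed
qed


lemma card_Pl_Mi_le:
  "card {i \<in> {1..n}. g i = Pl} + card {i \<in> {1..n}. g i = Mi} \<le> (n::nat)"
proof -
  have "card {i \<in> {1..n}. g i = Pl} + card {i \<in> {1..n}. g i = Mi}
      = card ({i \<in> {1..n}. g i = Pl} \<union> {i \<in> {1..n}. g i = Mi})"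
    by (rule card_Un_disjoint[symmetric]) auto
  also have "\<dots> \<le> card {1..n}" by (rule card_mono) auto
  finally show ?thesis by simp
qed

lemma coprod_of_mat_of_coprod:
  assumes x: "(p, q, J, \<gamma>) \<in> Coprod m" and one: "(1::'a::ring_1) \<noteq> -1"
  shows "coprod_of_mat m (mat_of_coprod m (p, q, J, \<gamma>) :: 'a mat) = (p, q, J, \<gamma>)"
proof -
  note C = CoprodD[OF x]
  let ?N = "mat_of_coprod m (p, q, J, \<gamma>) :: 'a mat"
  have J: "nonzero_rows m ?N = J" using nonzero_rows_mat_of_coprod[OF x one] .
  have g: "restrict (row_gamma m ?N J) {1..card J} = \<gamma>"
  proof (rule ext)
    fix i show "restrict (row_gamma m ?N J) {1..card J} i = \<gamma> i"
      using row_gamma_mat_of_coprod[OF x one, of i] GammaD(3)[OF C(4), of i] C(3) by (auto simp: restrict_def)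
  qed
  define P where "P = card {i \<in> {1..p+q}. \<gamma> i = Pl}"
  define M where "M = card {i \<in> {1..p+q}. \<gamma> i = Mi}"
  have cnt: "int P - int M = int p - int q" using GammaD(4)[OF C(4)] unfolding P_def M_def .
  have le: "P + M \<le> p + q" unfolding P_def M_def by (rule card_Pl_Mi_le)
  have e1: "P + q = p + M" using cnt by linarith
  have Mq: "M \<le> q" using e1 le by linarith
  have e2: "p + q - P - M = 2 * (q - M)" using e1 Mq le by linarith
  have eqs: "P + (p + q - P - M) div 2 = p" "M + (p + q - P - M) div 2 = q" using e1 Mq e2 by simp_all
  have "coprod_of_mat m ?N = (P + (p + q - P - M) div 2, M + (p + q - P - M) div 2, J, \<gamma>)"
    unfolding coprod_of_mat_def Let_def J g unfolding C(3) P_def M_def ..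
  then show ?thesis using eqs by simp
qed

lemma normal_form_row_some:
  assumes N: "normal_form m N" and rc: "r < m" "c < m" "N $$ (r,c) \<noteq> 0"
  shows "(SOME c'. c' < m \<and> N $$ (r,c') \<noteq> 0) = c"
proof -
  have ex: "\<exists>c'. c' < m \<and> N $$ (r,c') \<noteq> 0" using rc by auto
  have "(SOME c'. c' < m \<and> N $$ (r,c') \<noteq> 0) < m \<and> N $$ (r, SOME c'. c' < m \<and> N $$ (r,c') \<noteq> 0) \<noteq> 0"
    using someI_ex[OF ex] .
  then show ?thesis using normal_formD(5)[OF N rc(1) _ rc(2) _ rc(3)] by blast
qed

lemma nonzero_rows_iff: "r < m \<Longrightarrow> Suc r \<in> nonzero_rows m N \<longleftrightarrow> (\<exists>c<m. N $$ (r,c) \<noteq> 0)"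
  unfolding nonzero_rows_def by auto

lemma nonzero_rows_subset: "nonzero_rows m N \<subseteq> {1..m}" unfolding nonzero_rows_def by auto

lemma finite_nonzero_rows: "finite (nonzero_rows m N)" using nonzero_rows_subset finite_subset by blast

lemma row_gamma_cases:
  assumes N: "normal_form m N" and one: "(1::'a::ring_1) \<noteq> -1" and rJ: "Suc r \<in> nonzero_rows m (N :: 'a mat)" and r: "r < m"
  defines "J \<equiv> nonzero_rows m N"
  shows "(N $$ (r,r) = 1 \<and> row_gamma m N J (elem_index J (Suc r)) = Pl) \<or>
         (N $$ (r,r) = -1 \<and> row_gamma m N J (elem_index J (Suc r)) = Mi) \<or>
         (\<exists>c<m. c \<noteq> r \<and> N $$ (r,c) = 1 \<and> N $$ (r,r) = 0 \<and> Suc c \<in> J \<and> row_gamma m N J (elem_index J (Suc r)) = Idx (elem_index J (Suc c)))"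
proof -
  have fin: "finite J" unfolding J_def by (rule finite_nonzero_rows)
  have rJ': "Suc r \<in> J" using rJ unfolding J_def .
  have er: "nth_elem J (elem_index J (Suc r)) - 1 = r" using nth_elem_elem_index[OF fin rJ'] by simp
  have vals: "\<And>i j. i < m \<Longrightarrow> j < m \<Longrightarrow> N $$ (i,j) \<in> {0,1,-1}" using normal_formD[OF N] by blast
  have sym: "\<And>i j. i < m \<Longrightarrow> j < m \<Longrightarrow> N $$ (i,j) = N $$ (j,i)" using normal_formD[OF N] by blast
  show ?thesis
  proof (cases "N $$ (r,r) = 1")
    case True
    then show ?thesis unfolding row_gamma_def Let_def er by simp
  next
    case F1: False
    show ?thesis
    proof (cases "N $$ (r,r) = -1")
      case True
      then show ?thesis using one unfolding row_gamma_def Let_def er by simp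
    next
      case False
      have r0: "N $$ (r,r) = 0" using vals[OF r r] F1 False by auto
      obtain c where c: "c < m" "N $$ (r,c) \<noteq> 0" using rJ nonzero_rows_iff[OF r] by auto
      have cr: "c \<noteq> r" using c r0 by auto
      have c1: "N $$ (r,c) = 1" using vals[OF r c(1)] c(2) normal_formD(4)[OF N r c(1)] cr by auto
      have cJ: "Suc c \<in> J" unfolding J_def using nonzero_rows_iff[OF c(1)] sym[OF r c(1)] c r by auto
      have "row_gamma m N J (elem_index J (Suc r)) = Idx (elem_index J (Suc c))"
        unfolding row_gamma_def Let_def er using F1 False normal_form_row_some[OF N r c(1) c(2)] by simp
      then show ?thesis using c cr c1 r0 cJ by blast
    qed
  qed
qed

lemma mat_of_coprod_of_mat:
  assumes N: "normal_form m (N :: 'a::ring_1 mat)" and one: "(1::'a) \<noteq> -1"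
  shows "mat_of_coprod m (coprod_of_mat m N) = N"
proof -
  define J where "J = nonzero_rows m N"
  have fin: "finite J" unfolding J_def by (rule finite_nonzero_rows)
  have Nc: "N \<in> carrier_mat m m" using normal_formD(1)[OF N] .
  have vals: "\<And>i j. i < m \<Longrightarrow> j < m \<Longrightarrow> N $$ (i,j) \<in> {0,1,-1}" using normal_formD[OF N] by blast
  have sym: "\<And>i j. i < m \<Longrightarrow> j < m \<Longrightarrow> N $$ (i,j) = N $$ (j,i)" using normal_formD[OF N] by blast
  obtain p q where PhiN: "coprod_of_mat m N = (p, q, J, restrict (row_gamma m N J) {1..card J})"
    unfolding coprod_of_mat_def Let_def J_def by auto
  show ?thesis
  proof (rule eq_matI)
    fix r c assume "r < dim_row N" "c < dim_col N"
    then have r: "r < m" and c: "c < m" using Nc by auto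
    show "mat_of_coprod m (coprod_of_mat m N) $$ (r,c) = N $$ (r,c)"
    proof (cases "Suc r \<in> J \<and> Suc c \<in> J")
      case False
      have "N $$ (r,c) = 0"
      proof (cases "Suc r \<in> J")
        case True
        then have "Suc c \<notin> J" using False by auto
        then have "N $$ (c,r) = 0" using nonzero_rows_iff[OF c] r unfolding J_def by auto
        then show ?thesis using sym[OF r c] by simp
      next
        case False
        then show ?thesis using nonzero_rows_iff[OF r] c unfolding J_def by auto
      qed
      then show ?thesis using False r c unfolding PhiN by (auto simp: index_mat_of_coprod)
    next
      case True
      then have rJ: "Suc r \<in> J" and cJ: "Suc c \<in> J" by auto
      have ir: "elem_index J (Suc r) \<in> {1..card J}" using elem_index_in[OF fin rJ] .
      have "mat_of_coprod m (coprod_of_mat m N) $$ (r,c) = gamma_entry (row_gamma m N J (elem_index J (Suc r))) (elem_index J (Suc r)) (elem_index J (Suc c))"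
        using r c rJ cJ ir unfolding PhiN by (simp add: index_mat_of_coprod)
      also have "\<dots> = N $$ (r,c)"
      proof -
        note D = row_gamma_cases[OF N one rJ[unfolded J_def] r, folded J_def]
        have ixeq: "elem_index J (Suc r) = elem_index J (Suc c) \<longleftrightarrow> r = c" using elem_index_inj[OF fin rJ cJ] by auto
        show ?thesis
        proof (cases "N $$ (r,r) = 1")
          case True
          then have "row_gamma m N J (elem_index J (Suc r)) = Pl" using D one by auto
          moreover have "r \<noteq> c \<Longrightarrow> N $$ (r,c) = 0" using normal_formD(5)[OF N r r c] True by auto
          ultimately show ?thesis using True ixeq by (auto simp: gamma_entry_def)
        next
          case F1: False
          show ?thesis
          proof (cases "N $$ (r,r) = -1")
            case True
            then have "row_gamma m N J (elem_index J (Suc r)) = Mi" using D one by auto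
            moreover have "r \<noteq> c \<Longrightarrow> N $$ (r,c) = 0" using normal_formD(5)[OF N r r c] True by auto
            ultimately show ?thesis using True ixeq by (auto simp: gamma_entry_def)
          next
            case False
            then obtain c1 where c1: "c1 < m" "c1 \<noteq> r" "N $$ (r,c1) = 1" "Suc c1 \<in> J"
              "row_gamma m N J (elem_index J (Suc r)) = Idx (elem_index J (Suc c1))" using D F1 by auto
            have e: "elem_index J (Suc c1) = elem_index J (Suc c) \<longleftrightarrow> c1 = c" using elem_index_inj[OF fin c1(4) cJ] by auto
            have "c1 \<noteq> c \<Longrightarrow> N $$ (r,c) = 0" using normal_formD(5)[OF N r c1(1) c] c1 by auto
            then show ?thesis using c1 e by (auto simp: gamma_entry_def)
          qed
        qed
      qed
      finally show ?thesis .
    qed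
  qed (use Nc in \<open>auto simp: mat_of_coprod_def PhiN\<close>)
qed


lemma coprod_of_mat_in_Coprod:
  assumes N: "normal_form m (N :: 'a::ring_1 mat)" and one: "(1::'a) \<noteq> -1"
  shows "coprod_of_mat m N \<in> Coprod m"
proof -
  define J where "J = nonzero_rows m N"
  define n where "n = card J"
  define \<gamma> where "\<gamma> = restrict (row_gamma m N J) {1..n}"
  define P where "P = card {i \<in> {1..n}. \<gamma> i = Pl}"
  define M where "M = card {i \<in> {1..n}. \<gamma> i = Mi}"
  define I where "I = {i \<in> {1..n}. \<gamma> i \<noteq> Pl \<and> \<gamma> i \<noteq> Mi}"
  have PhiN: "coprod_of_mat m N = (P + (n - P - M) div 2, M + (n - P - M) div 2, J, \<gamma>)"
    unfolding coprod_of_mat_def Let_def J_def[symmetric] n_def[symmetric] \<gamma>_def[symmetric] P_def M_def ..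
  have fin: "finite J" unfolding J_def by (rule finite_nonzero_rows)
  have Jsub: "J \<subseteq> {1..m}" unfolding J_def by (rule nonzero_rows_subset)
  have nm: "n \<le> m" unfolding n_def using card_mono[OF _ Jsub] by simp
  have sym: "\<And>i j. i < m \<Longrightarrow> j < m \<Longrightarrow> N $$ (i,j) = N $$ (j,i)" using normal_formD[OF N] by blast
  have rowdata: "\<exists>r. r < m \<and> Suc r \<in> J \<and> elem_index J (Suc r) = i" if i: "i \<in> {1..n}" for i
  proof -
    have eJ: "nth_elem J i \<in> J" using nth_elem_in[OF fin] i unfolding n_def by simp
    then have "1 \<le> nth_elem J i" "nth_elem J i \<le> m" using Jsub by auto
    then show ?thesis using eJ elem_index_nth_elem[OF fin] i unfolding n_def
      by (intro exI[of _ "nth_elem J i - 1"]) auto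
  qed
  have A: "\<gamma> i \<in> Idx ` {1..n} \<union> {Pl, Mi}" if i: "i \<in> {1..n}" for i
  proof -
    obtain r where r: "r < m" "Suc r \<in> J" "elem_index J (Suc r) = i" using rowdata[OF i] by auto
    note D = row_gamma_cases[OF N one r(2)[unfolded J_def] r(1), folded J_def]
    have "\<gamma> i = row_gamma m N J (elem_index J (Suc r))" using i r unfolding \<gamma>_def by simp
    then show ?thesis using D elem_index_in[OF fin] unfolding n_def by auto
  qed
  have B: "i \<noteq> j \<and> \<gamma> j = Idx i" if i: "i \<in> {1..n}" and g: "\<gamma> i = Idx j" for i j
  proof -
    obtain r where r: "r < m" "Suc r \<in> J" "elem_index J (Suc r) = i" using rowdata[OF i] by auto
    note D = row_gamma_cases[OF N one r(2)[unfolded J_def] r(1), folded J_def]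
    have gi: "\<gamma> i = row_gamma m N J (elem_index J (Suc r))" using i r unfolding \<gamma>_def by simp
    obtain c where c: "c < m" "c \<noteq> r" "N $$ (r,c) = 1" "Suc c \<in> J" "j = elem_index J (Suc c)"
      using D g gi by auto
    have ij: "i \<noteq> j" using elem_index_inj[OF fin r(2) c(4)] r(3) c(2,5) by auto
    have j: "j \<in> {1..n}" using elem_index_in[OF fin c(4)] c(5) unfolding n_def by simp
    note D2 = row_gamma_cases[OF N one c(4)[unfolded J_def] c(1), folded J_def]
    have cr: "N $$ (c,r) = 1" using sym[OF c(1) r(1)] c(3) by simp
    have cc: "N $$ (c,c) = 0" using normal_formD(5)[OF N c(1) c(1) r(1)] cr c(2) by auto
    obtain c' where c': "c' < m" "N $$ (c,c') = 1" "row_gamma m N J (elem_index J (Suc c)) = Idx (elem_index J (Suc c'))"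
      using D2 cc one by auto
    have "c' = r" using normal_formD(5)[OF N c(1) c'(1) r(1)] c' cr by auto
    then have "\<gamma> j = Idx i" using c' j c(5) r(3) unfolding \<gamma>_def by simp
    then show ?thesis using ij by simp
  qed
  define f where "f i = (case \<gamma> i of Idx k \<Rightarrow> k | _ \<Rightarrow> 0)" for i
  have ev: "even (card I)"
  proof (rule even_card_fixpoint_free_involution[of I f])
    show "finite I" unfolding I_def by auto
    fix i assume iI: "i \<in> I"
    then have i: "i \<in> {1..n}" "\<gamma> i \<noteq> Pl" "\<gamma> i \<noteq> Mi" unfolding I_def by auto
    then obtain k where k: "\<gamma> i = Idx k" "k \<in> {1..n}" using A[OF i(1)] by auto
    have "i \<noteq> k \<and> \<gamma> k = Idx i" using B[OF i(1) k(1)] .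
    then show "f i \<in> I \<and> f (f i) = i \<and> f i \<noteq> i" using k unfolding f_def I_def by auto
  qed
  have part: "n = P + M + card I"
  proof -
    have "card {1..n} = card ({i \<in> {1..n}. \<gamma> i = Pl} \<union> {i \<in> {1..n}. \<gamma> i = Mi} \<union> I)"
      unfolding I_def by (rule arg_cong[of _ _ card]) auto
    also have "\<dots> = card ({i \<in> {1..n}. \<gamma> i = Pl} \<union> {i \<in> {1..n}. \<gamma> i = Mi}) + card I"
      unfolding I_def by (rule card_Un_disjoint) auto
    also have "card ({i \<in> {1..n}. \<gamma> i = Pl} \<union> {i \<in> {1..n}. \<gamma> i = Mi}) = P + M"
      unfolding P_def M_def by (rule card_Un_disjoint) auto
    finally show ?thesis by simp
  qed
  define p where "p = P + (n - P - M) div 2"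
  define q where "q = M + (n - P - M) div 2"
  have nI: "n - P - M = card I" using part by simp
  have I2: "2 * (card I div 2) = card I" using ev by simp
  have pq1: "p + q = n" unfolding p_def q_def nI using part I2 by simp
  have pq2: "int p - int q = int P - int M" unfolding p_def q_def by simp
  have G1: "\<gamma> \<in> {1..p+q} \<rightarrow>\<^sub>E Idx ` {1..p+q} \<union> {Pl, Mi}"
  proof -
    have "\<forall>i \<in> {1..n}. row_gamma m N J i \<in> Idx ` {1..n} \<union> {Pl, Mi}"
    proof
      fix i assume i: "i \<in> {1..n}"
      from A[OF i] show "row_gamma m N J i \<in> Idx ` {1..n} \<union> {Pl, Mi}" using i by (simp add: \<gamma>_def)
    qed
    then show ?thesis unfolding pq1 \<gamma>_def by (simp only: restrict_PiE_iff)
  qed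
  have G2: "\<forall>i \<in> {1..p+q}. \<forall>j. \<gamma> i = Idx j \<longrightarrow> i \<noteq> j \<and> \<gamma> j = Idx i"
    unfolding pq1 using B by blast
  have G3: "int (card {i \<in> {1..p+q}. \<gamma> i = Pl}) - int (card {i \<in> {1..p+q}. \<gamma> i = Mi}) = int p - int q"
    unfolding pq1 pq2 P_def M_def ..
  have G: "\<gamma> \<in> Gamma p q"
    unfolding Gamma_def mem_Collect_eq using G1 G2 G3 by (intro conjI)
  have "p + q \<le> m \<and> J \<subseteq> {1..m} \<and> card J = p + q \<and> \<gamma> \<in> Gamma p q"
    using G pq1 nm Jsub unfolding n_def by (intro conjI) simp_all
  then show ?thesis unfolding PhiN p_def[symmetric] q_def[symmetric] Coprod_def
    by (simp only: mem_Collect_eq prod.case)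
qed

lemma bij_betw_mat_of_coprod:
  assumes one: "(1::'a::ring_1) \<noteq> -1"
  shows "bij_betw (mat_of_coprod m) (Coprod m) {N :: 'a mat. normal_form m N}"
proof (rule bij_betw_byWitness[where f' = "coprod_of_mat m"])
  show "\<forall>x\<in>Coprod m. coprod_of_mat m (mat_of_coprod m x :: 'a mat) = x"
    using coprod_of_mat_of_coprod[OF _ one] by auto
  show "\<forall>N\<in>{N :: 'a mat. normal_form m N}. mat_of_coprod m (coprod_of_mat m N) = N"
    using mat_of_coprod_of_mat[OF _ one] by auto
  show "mat_of_coprod m ` Coprod m \<subseteq> {N :: 'a mat. normal_form m N}"
    using normal_form_mat_of_coprod[OF _ one] by auto
  show "coprod_of_mat m ` {N :: 'a mat. normal_form m N} \<subseteq> Coprod m"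
    using coprod_of_mat_in_Coprod[OF _ one] by auto
qed




section \<open>The orbit space\<close>

lemma normal_form_hermitian:
  fixes N :: "'a::conjugatable_field mat"
  assumes "normal_form m N"
  shows "N \<in> hermitian_mats m"
proof -
  note D = normal_formD[OF assms]
  have "conjugate (N $$ (j, i)) = N $$ (i, j)" if "i < m" "j < m" for i j
    using D(2,3)[OF that] by (auto simp: conjugate_neg)
  then have "mat_adjoint N = N" using D(1) by (intro eq_matI) auto
  then show ?thesis using D(1) by (simp add: hermitian_mats_def)
qed

lemma bij_betw_normal_form_quotient:
  fixes m :: nat
  assumes normalizable: "\<And>a::'a::conjugatable_ordered_field. conjugate a = a \<Longrightarrow> a \<noteq> 0 \<Longrightarrow>
      \<exists>x. x * conjugate x * a \<in> {1, -1}"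
  shows "bij_betw (\<lambda>N. borel_congruent m `` {N}) {N :: 'a mat. normal_form m N}
    (hermitian_mats m // borel_congruent m)"
proof -
  let ?class = "\<lambda>N :: 'a mat. borel_congruent m `` {N}"
  note E = equiv_borel_congruent[of m, where 'a='a]
  have "inj_on ?class {N. normal_form m N}"
  proof (rule inj_onI)
    fix N1 N2 :: "'a mat"
    assume N: "N1 \<in> {N. normal_form m N}" "N2 \<in> {N. normal_form m N}" and eq: "?class N1 = ?class N2"
    have "(N1, N2) \<in> borel_congruent m"
      using eq_equiv_class[OF eq E] normal_form_hermitian N(2) by blast
    then obtain b where "b \<in> Borel m" "N2 = b * N1 * mat_adjoint b"
      by (auto simp: borel_congruent_def)
    then show "N1 = N2" using normal_form_unique N by blast
  qed
  moreover have "?class ` {N. normal_form m N} = hermitian_mats m // borel_congruent m"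
  proof
    show "?class ` {N. normal_form m N} \<subseteq> hermitian_mats m // borel_congruent m"
      using normal_form_hermitian by (auto intro: quotientI)
    show "hermitian_mats m // borel_congruent m \<subseteq> ?class ` {N. normal_form m N}"
    proof
      fix X :: "'a mat set" assume "X \<in> hermitian_mats m // borel_congruent m"
      then obtain z where z: "z \<in> hermitian_mats m" "X = ?class z"
        by (auto elim: quotientE)
      have "\<exists>N. (z, N) \<in> borel_congruent m \<and> normal_form m N"
        by (rule normal_form_exists[OF _ z(1)]) (rule normalizable)
      then obtain N where "(z, N) \<in> borel_congruent m" "normal_form m N" by blast
      then show "X \<in> ?class ` {N. normal_form m N}"
        using equiv_class_eq[OF E] z(2) by auto
    qed
  qed
  ultimately show ?thesis unfolding bij_betw_def by blast
qed

lemma hermitian_quotient_bij_Coprod: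
  assumes normalizable: "\<And>a::'a::conjugatable_ordered_field. conjugate a = a \<Longrightarrow> a \<noteq> 0 \<Longrightarrow>
      \<exists>x. x * conjugate x * a \<in> {1, -1}"
  shows "\<exists>g. bij_betw g (hermitian_mats m // (borel_congruent m :: 'a mat rel)) (Coprod m)"
proof -
  have "bij_betw ((\<lambda>N. borel_congruent m `` {N}) \<circ> mat_of_coprod m) (Coprod m)
      (hermitian_mats m // (borel_congruent m :: 'a mat rel))"
    by (rule bij_betw_trans[OF bij_betw_mat_of_coprod[OF one_neq_minus_one_conjugatable]
        bij_betw_normal_form_quotient]) (rule normalizable)
  then show ?thesis using bij_betw_inv by blast
qed

lemma normalizable_real: "a \<noteq> 0 \<Longrightarrow> \<exists>x. x * conjugate x * a \<in> {1, -1 :: real}"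
  by (rule exI[of _ "1 / sqrt \<bar>a\<bar>"]) (auto simp: abs_if field_simps)

lemma normalizable_complex:
  assumes "conjugate a = a" "a \<noteq> 0"
  shows "\<exists>x. x * conjugate x * a \<in> {1, -1 :: complex}"
proof -
  have a: "a = complex_of_real (Re a)" using assms(1) by (simp add: complex_eq_iff)
  then have "Re a \<noteq> 0" using assms(2) by (metis of_real_0)
  then obtain x where x: "x * x * Re a \<in> {1, -1}" using normalizable_real by auto
  have eq: "complex_of_real x * conjugate (complex_of_real x) * a = complex_of_real (x * x * Re a)"
    by (subst a) simp
  have "complex_of_real (x * x * Re a) \<in> {1, -1}" using x by (auto simp del: of_real_mult)
  then show ?thesis unfolding eq[symmetric] by blast
qed

lemma Her_eq: "Her m = hermitian_mats m"
proof -
  have "adj_mat = mat_adjoint" by (intro ext eq_matI) (auto simp: adj_mat_def)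
  then show ?thesis by (simp add: Her_def hermitian_mats_def)
qed

lemma orbit_rel_C_eq: "orbit_rel_C m = borel_congruent m"
proof -
  have "adj_mat = mat_adjoint" by (intro ext eq_matI) (auto simp: adj_mat_def)
  then show ?thesis by (simp add: orbit_rel_C_def borel_congruent_def Her_eq)
qed

lemma Sym_eq: "Sym m = hermitian_mats m"
proof -
  have "transpose_mat = (mat_adjoint :: real mat \<Rightarrow> real mat)" by (intro ext eq_matI) auto
  then show ?thesis by (simp add: Sym_def hermitian_mats_def)
qed

lemma orbit_rel_R_eq: "orbit_rel_R m = borel_congruent m"
proof -
  have "transpose_mat = (mat_adjoint :: real mat \<Rightarrow> real mat)" by (intro ext eq_matI) auto
  then show ?thesis by (simp add: orbit_rel_R_def borel_congruent_def Sym_eq)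
qed

theorem corollary8p24:
  fixes m :: nat
  shows "(\<exists>f. bij_betw f (Her m // orbit_rel_C m) (Sym m // orbit_rel_R m)) \<and>
         (\<exists>g. bij_betw g (Sym m // orbit_rel_R m) (Coprod m))"
proof -
  have "\<exists>g. bij_betw g (hermitian_mats m // (borel_congruent m :: complex mat rel)) (Coprod m)"
    by (rule hermitian_quotient_bij_Coprod) (rule normalizable_complex)
  then obtain g1 where g1: "bij_betw g1 (Her m // orbit_rel_C m) (Coprod m)"
    unfolding Her_eq orbit_rel_C_eq by blast
  have "\<exists>g. bij_betw g (hermitian_mats m // (borel_congruent m :: real mat rel)) (Coprod m)"
    by (rule hermitian_quotient_bij_Coprod) (rule normalizable_real)
  then obtain g2 where g2: "bij_betw g2 (Sym m // orbit_rel_R m) (Coprod m)"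
    unfolding Sym_eq orbit_rel_R_eq by blast
  have "bij_betw (the_inv_into (Sym m // orbit_rel_R m) g2 \<circ> g1) (Her m // orbit_rel_C m) (Sym m // orbit_rel_R m)"
    using bij_betw_trans[OF g1 bij_betw_the_inv_into[OF g2]] .
  with g2 show ?thesis by blast
qed

end
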